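(* Let $m=2t+1\ge5$ and $n=\frac{3^m+1}{4}$. For every integer $\delta$ with $\delta_{2,n}+1\le\delta\le\delta_{1,n}$, the LCD BCH code $\mathcal{C}_{(n,3,\delta,1)}$ has parameters $[n,2m+1,d\ge\delta_{2,n}]$ and $\mathcal{C}_{(n,3,\delta+1,0)}$ has parameters $[n,2m,d\ge2\delta_{2,n}]$.
   Context: Let $q$ be a prime power and $n\ge2$ an integer with $\gcd(n,q)=1$. Let $\ell=\mathrm{ord}_n(q)$, let $\alpha$ be a generator of $\mathbb{F}_{q^\ell}^*$, $\beta=\alpha^{(q^\ell-1)/n}$, and let $m_i(x)$ be the minimal polynomial of $\beta^i$ over $\mathbb{F}_q$. For integers $b\ge0$ and $2\le\delta\le n$, $\mathcal{C}_{(n,q,\delta,b)}$ denotes the cyclic (BCH) code of length $n$ over $\mathbb{F}_q$ with generator polynomial $\mathrm{lcm}(m_b(x),\dots,m_{b+\delta-2}(x))$. A linear code $\mathcal{C}$ is LCD if $\mathcal{C}\cap\mathcal{C}^\perp=\{0\}$ (Euclidean dual). $[n,k,d\ge D]$ means length $n$, dimension $k$, minimum Hamming distance at least $D$. For $0\le s\le n-1$, $C_s=\{sq^i\bmod n:0\le i\le\ell-1\}$ is the $q$-cyclotomic coset of $s$ modulo $n$; its least element is its coset leader; $\mathrm{MinRep}_n$ is the set of coset leaders modulo $n$ (including $0$), and $\delta_{i,n}$ is the $i$-th largest element of $\mathrm{MinRep}_n$ (here with $q=3$). *)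

theory Defs
  imports "Berlekamp_Zassenhaus.Finite_Field" "HOL-Number_Theory.Number_Theory"
begin

datatype three = T0 | T1 | T2

lemma UNIV_three: "(UNIV :: three set) = {T0, T1, T2}"
  using three.exhaust by blast

instance three :: finite
  by standard (simp add: UNIV_three)

lemma card_three: "CARD(three) = 3"
  by (simp add: UNIV_three)

instance three :: prime_card
  by standard (simp add: card_three)

type_synonym F3 = "three mod_ring"

definition emb3 :: "F3 \<Rightarrow> 'k::field" where
  "emb3 x = of_int (to_int_mod_ring x)"

definition cyc_coset :: "nat \<Rightarrow> nat \<Rightarrow> nat \<Rightarrow> nat set" where
  "cyc_coset q n s = {(s * q ^ i) mod n | i. i < ord n q}"

definition MinRep :: "nat \<Rightarrow> nat \<Rightarrow> nat set" where
  "MinRep q n = {s. s < n \<and> s = Min (cyc_coset q n s)}"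

text \<open>delta_idx q i n = the i-th largest element of MinRep q n (i >= 1).\<close>
definition delta_idx :: "nat \<Rightarrow> nat \<Rightarrow> nat \<Rightarrow> nat" where
  "delta_idx q i n = (THE x. x \<in> MinRep q n \<and> card {y \<in> MinRep q n. x < y} = i - 1)"

definition minpoly3 :: "'k::field \<Rightarrow> F3 poly" where
  "minpoly3 \<gamma> = (THE p. monic p \<and> poly (map_poly emb3 p) \<gamma> = 0 \<and>
      (\<forall>r. poly (map_poly emb3 r) \<gamma> = 0 \<longrightarrow> p dvd r))"

definition bch_gen :: "'k::field \<Rightarrow> nat \<Rightarrow> nat \<Rightarrow> F3 poly" where
  "bch_gen \<beta> \<delta> b = Lcm ((\<lambda>i. minpoly3 (\<beta> ^ i)) ` {b .. b + \<delta> - 2})"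

text \<open>Cyclic code of length n generated by g: codewords are polynomials of degree < n
  (identified with vectors in F_3^n) that are multiples of g in F_3[x]/(x^n-1).\<close>
definition cyclic_code :: "nat \<Rightarrow> F3 poly \<Rightarrow> F3 poly set" where
  "cyclic_code n g = {c. degree c < n \<and> (\<exists>a. [c = g * a] (mod ([:-1:] + monom 1 n)))}"

definition bch_code :: "'k::field \<Rightarrow> nat \<Rightarrow> nat \<Rightarrow> nat \<Rightarrow> F3 poly set" where
  "bch_code \<beta> n \<delta> b = cyclic_code n (bch_gen \<beta> \<delta> b)"

definition hweight :: "F3 poly \<Rightarrow> nat" where
  "hweight c = card {i. coeff c i \<noteq> 0}"

definition code_dim :: "F3 poly set \<Rightarrow> nat" where
  "code_dim C = vector_space.dim (smult :: F3 \<Rightarrow> F3 poly \<Rightarrow> F3 poly) C"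

definition min_dist_ge :: "F3 poly set \<Rightarrow> nat \<Rightarrow> bool" where
  "min_dist_ge C D \<longleftrightarrow> (\<forall>c\<in>C. c \<noteq> 0 \<longrightarrow> D \<le> hweight c)"

definition dual_code :: "nat \<Rightarrow> F3 poly set \<Rightarrow> F3 poly set" where
  "dual_code n C = {c. degree c < n \<and> (\<forall>x\<in>C. (\<Sum>i<n. coeff c i * coeff x i) = 0)}"

definition is_LCD :: "nat \<Rightarrow> F3 poly set \<Rightarrow> bool" where
  "is_LCD n C \<longleftrightarrow> C \<inter> dual_code n C = {0}"

end

theory Submission
  imports Defs
begin

text \<open>Let \<open>n = (3^m + 1)/4\<close> and \<open>d1 = (3^(m-1) - 1)/8\<close>, so \<open>n = 6 d1 + 1\<close>. Since
  \<open>3^m \<equiv> -1 (mod n)\<close>, \<open>ord\<^sub>n 3 = 2m\<close> and every nonzero cyclotomic coset is closed under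
  \<open>s \<mapsto> n - s\<close>. Represent \<open>4 s\<close> modulo \<open>3^m + 1\<close> by \<open>m\<close> balanced ternary digits: multiplying by 3
  is a negacyclic shift of the digits, and \<open>min (s 3^r mod n) (n - s 3^r mod n)\<close> is a quarter of
  the absolute value of the shifted expansion. The expansions \<open>(1, \<dots>, 1, 0)\<close> and
  \<open>(-1, -1, 1, \<dots>, 1, 0)\<close> are minimal among their shifts, so \<open>d1\<close> and \<open>d1 - 2\<close> are coset leaders,
  and a digit-counting argument shows that a coset all of whose elements are at least \<open>d1 - 1\<close>
  contains \<open>d1\<close>. Hence \<open>\<delta>\<^sub>1 = d1\<close>, \<open>\<delta>\<^sub>2 = d1 - 2\<close>, \<open>|C d1| = 2m\<close>, and for \<open>\<delta>\<close> in the given range the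
  defining set of \<open>C(n,3,\<delta>,1)\<close> is everything except \<open>0\<close> and \<open>C d1\<close>. Being closed under negation,
  it yields an LCD code (via Parseval's identity for the transform defined by \<open>\<beta>\<close>); the dimension
  is \<open>n\<close> minus the size of the defining set, and the distances follow from the BCH bound, for
  the second code with the \<open>2\<delta> - 1\<close> consecutive exponents \<open>-(\<delta> - 1), \<dots>, \<delta> - 1\<close>.\<close>

section \<open>Balanced ternary expansions\<close>

definition balanced_digits :: "nat \<Rightarrow> (nat \<Rightarrow> int) \<Rightarrow> bool" where
  "balanced_digits m e \<longleftrightarrow> (\<forall>i<m. e i \<in> {-1, 0, 1})"

definition bt_val :: "nat \<Rightarrow> (nat \<Rightarrow> int) \<Rightarrow> int" where
  "bt_val m e = (\<Sum>i<m. e i * 3 ^ i)"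

text \<open>Multiplication by 3 modulo \<open>3^m + 1\<close> acts on \<open>m\<close>-digit balanced ternary expansions as
  this negacyclic shift.\<close>
definition neg_shift :: "nat \<Rightarrow> (nat \<Rightarrow> int) \<Rightarrow> nat \<Rightarrow> int" where
  "neg_shift m e = (\<lambda>i. if i = 0 then - e (m - 1) else e (i - 1))"

lemma bt_val_Suc: "bt_val (Suc m) e = bt_val m e + e m * 3 ^ m"
  by (simp add: bt_val_def)

lemma bt_val_cong: "(\<And>i. i < m \<Longrightarrow> e i = f i) \<Longrightarrow> bt_val m e = bt_val m f"
  unfolding bt_val_def by (intro sum.cong) auto

lemma bt_val_uminus: "bt_val m (\<lambda>i. - e i) = - bt_val m e"
  unfolding bt_val_def by (simp add: sum_negf)

lemma bt_val_top_zero: "e (m - 1) = 0 \<Longrightarrow> bt_val m e = bt_val (m - 1) e"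
  by (cases m) (auto simp: bt_val_Suc)

lemma balanced_digits_mono: "balanced_digits m e \<Longrightarrow> k \<le> m \<Longrightarrow> balanced_digits k e"
  by (simp add: balanced_digits_def)

lemma balanced_digits_uminus: "balanced_digits m e \<Longrightarrow> balanced_digits m (\<lambda>i. - e i)"
  by (auto simp: balanced_digits_def)

lemma abs_bt_val_le: "balanced_digits m e \<Longrightarrow> 2 * \<bar>bt_val m e\<bar> \<le> 3 ^ m - 1"
proof (induction m)
  case 0
  then show ?case by (simp add: bt_val_def)
next
  case (Suc m)
  have "2 * \<bar>bt_val m e\<bar> \<le> 3 ^ m - 1"
    using Suc by (simp add: balanced_digits_def)
  moreover have "\<bar>e m * 3 ^ m\<bar> \<le> (3::int) ^ m"
    using Suc.prems by (auto simp: balanced_digits_def abs_mult)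
  ultimately show ?case
    using abs_triangle_ineq[of "bt_val m e" "e m * 3 ^ m"] by (simp add: bt_val_Suc)
qed

lemma abs_bt_val_ge_top_nonzero:
  assumes "0 < m" "balanced_digits m e" "e (m - 1) \<noteq> 0"
  shows "3 ^ (m - 1) + 1 \<le> 2 * \<bar>bt_val m e\<bar>"
proof -
  obtain k where k: "m = Suc k" using assms(1) by (cases m) auto
  have "2 * \<bar>bt_val k e\<bar> \<le> 3 ^ k - 1"
    using assms(2) k by (intro abs_bt_val_le) (simp add: balanced_digits_def)
  moreover have "e k \<in> {-1, 1}"
    using assms(2,3) k by (auto simp: balanced_digits_def)
  ultimately show ?thesis using k by (auto simp: bt_val_Suc abs_le_iff)
qed

lemma balanced_digits_exist:
  "2 * \<bar>y\<bar> \<le> 3 ^ m - 1 \<Longrightarrow> \<exists>e. balanced_digits m e \<and> bt_val m e = y"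
proof (induction m arbitrary: y)
  case 0
  then show ?case by (auto simp: balanced_digits_def bt_val_def)
next
  case (Suc m)
  define t :: int where
    "t = (if 3 ^ m + 1 \<le> 2 * y then 1 else if 2 * y \<le> - (3 ^ m + 1) then -1 else 0)"
  have "odd ((3::int) ^ m)" by simp
  then have "2 * y \<noteq> 3 ^ m" "2 * y \<noteq> - (3 ^ m)"
    by (metis dvd_triv_left, metis dvd_minus_iff dvd_triv_left)
  then have "2 * \<bar>y - t * 3 ^ m\<bar> \<le> 3 ^ m - 1"
    using Suc.prems by (auto simp: t_def split: abs_split)
  then obtain e where e: "balanced_digits m e" "bt_val m e = y - t * 3 ^ m"
    using Suc.IH by blast
  have "balanced_digits (Suc m) (e(m := t))"
    using e(1) by (auto simp: balanced_digits_def t_def less_Suc_eq)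
  moreover have "bt_val (Suc m) (e(m := t)) = y"
    using e(2) bt_val_cong[of m "e(m := t)" e] by (simp add: bt_val_Suc)
  ultimately show ?case by blast
qed

lemma bt_val_neg_shift:
  assumes "0 < m"
  shows "bt_val m (neg_shift m e) = 3 * bt_val m e - e (m - 1) * (3 ^ m + 1)"
proof -
  obtain k where k: "m = Suc k" using assms by (cases m) auto
  have "bt_val (Suc k) (neg_shift (Suc k) e)
      = neg_shift (Suc k) e 0 + (\<Sum>i<k. neg_shift (Suc k) e (Suc i) * 3 ^ Suc i)"
    unfolding bt_val_def by (subst sum.lessThan_Suc_shift) simp
  also have "\<dots> = - e k + 3 * bt_val k e"
    by (simp add: neg_shift_def bt_val_def sum_distrib_left mult.assoc mult.left_commute)
  finally show ?thesis using k by (simp add: bt_val_Suc algebra_simps)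
qed

lemma balanced_digits_neg_shift:
  assumes "0 < m" "balanced_digits m e"
  shows "balanced_digits m (neg_shift m e)"
proof -
  have "e (m - 1) \<in> {-1, 0, 1}"
    using assms by (simp add: balanced_digits_def)
  then show ?thesis
    using assms(2) by (auto simp: balanced_digits_def neg_shift_def)
qed

lemma balanced_digits_neg_shift_pow:
  "0 < m \<Longrightarrow> balanced_digits m e \<Longrightarrow> balanced_digits m ((neg_shift m ^^ k) e)"
  by (induction k) (auto intro: balanced_digits_neg_shift)

lemma neg_shift_pow_nth:
  "k \<le> m \<Longrightarrow> i < m \<Longrightarrow>
   (neg_shift m ^^ k) e i = (if i < k then - e (m - k + i) else e (i - k))"
proof (induction k arbitrary: i)
  case (Suc k)
  then show ?case by (cases "i = 0") (auto simp: neg_shift_def)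
qed simp

lemma bt_val_neg_shift_pow_add:
  "bt_val m ((neg_shift m ^^ (m + r)) e) = - bt_val m ((neg_shift m ^^ r) e)"
proof -
  have "bt_val m ((neg_shift m ^^ m) f) = - bt_val m f" for f
    using bt_val_cong[of m "(neg_shift m ^^ m) f" "\<lambda>i. - f i"]
    by (simp add: neg_shift_pow_nth bt_val_uminus)
  then show ?thesis by (simp add: funpow_add)
qed

lemma abs_bt_val_neg_shift_pow_mod:
  "\<bar>bt_val m ((neg_shift m ^^ r) e)\<bar> = \<bar>bt_val m ((neg_shift m ^^ (r mod m)) e)\<bar>"
proof (induction r rule: less_induct)
  case (less r)
  show ?case
  proof (cases "r < m \<or> m = 0")
    case False
    then obtain r' where r': "r = m + r'" "r' < r"
      by (metis add_diff_inverse_nat gr0I less_add_same_cancel2)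
    then show ?thesis
      using less bt_val_neg_shift_pow_add[of m r' e] by simp
  qed auto
qed

lemma bt_val_neg_shift_pow_cong:
  assumes "0 < m"
  shows "[bt_val m ((neg_shift m ^^ k) e) = 3 ^ k * bt_val m e] (mod (3 ^ m + 1))"
proof (induction k)
  case (Suc k)
  have "[bt_val m ((neg_shift m ^^ Suc k) e) = 3 * bt_val m ((neg_shift m ^^ k) e)] (mod (3 ^ m + 1))"
    using assms by (simp add: bt_val_neg_shift cong_iff_dvd_diff)
  also have "[3 * bt_val m ((neg_shift m ^^ k) e) = 3 * (3 ^ k * bt_val m e)] (mod (3 ^ m + 1))"
    using Suc by (intro cong_mult) auto
  finally show ?case by (simp add: mult.assoc)
qed simp

lemma odd_bt_val_iff:
  "balanced_digits m e \<Longrightarrow> (\<forall>i<m. e i \<noteq> 0) \<Longrightarrow> odd (bt_val m e) \<longleftrightarrow> odd m"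
proof (induction m)
  case 0
  then show ?case by (simp add: bt_val_def)
next
  case (Suc m)
  then have "e m \<in> {-1, 1}" "odd (bt_val m e) \<longleftrightarrow> odd m"
    by (auto simp: balanced_digits_def)
  then show ?case by (auto simp: bt_val_Suc)
qed

lemma sum_three_powers: "2 * (\<Sum>i<k. (3::int) ^ i) = 3 ^ k - 1"
  by (induction k) auto

lemma bt_val_deficit:
  "2 * L = 3 ^ k - 1 \<Longrightarrow> L - bt_val k e = (\<Sum>i<k. (1 - e i) * 3 ^ i)"
  using sum_three_powers[of k] by (simp add: bt_val_def sum_subtractf algebra_simps)

lemma digits_near_max:
  assumes e: "balanced_digits k e" and L: "2 * L = 3 ^ k - 1" and near: "L - 4 \<le> bt_val k e"
  shows "\<And>i. 2 \<le> i \<Longrightarrow> i < k \<Longrightarrow> e i = 1" and "1 < k \<Longrightarrow> 0 \<le> e 1"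
proof -
  have deficit: "(1 - e i) * 3 ^ i \<le> 4" if "i < k" for i
  proof -
    have "(1 - e i) * 3 ^ i \<le> (\<Sum>j<k. (1 - e j) * (3::int) ^ j)"
      using e that by (intro member_le_sum) (auto simp: balanced_digits_def)
    then show ?thesis using bt_val_deficit[OF L, of e] near by linarith
  qed
  show "e i = 1" if "2 \<le> i" "i < k" for i
  proof -
    have "(3::int) ^ 2 \<le> 3 ^ i" using that(1) by (intro power_increasing) auto
    then show ?thesis
      using deficit[OF that(2)] e that(2) by (auto simp: balanced_digits_def)
  qed
  show "0 \<le> e 1" if "1 < k"
    using deficit[OF that] by simp
qed

lemma top_zero_near_max:
  assumes g: "balanced_digits m g" "g (m - 1) = 0"
    and L: "2 * L = 3 ^ (m - 1) - 1" "L - 4 \<le> \<bar>bt_val m g\<bar>"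
  shows "\<And>i. 2 \<le> i \<Longrightarrow> i < m - 1 \<Longrightarrow> \<bar>g i\<bar> = 1"
    and "(\<forall>i<m - 1. g i \<noteq> 0) \<Longrightarrow> 3 \<le> m \<Longrightarrow> 4 dvd bt_val m g \<Longrightarrow> 4 dvd L \<Longrightarrow>
      \<bar>bt_val m g\<bar> = L"
proof -
  define h where "h = (if 0 \<le> bt_val m g then g else (\<lambda>i. - g i))"
  have h: "balanced_digits (m - 1) h"
    using g(1) by (auto simp: h_def intro: balanced_digits_uminus balanced_digits_mono)
  have abs_h: "\<bar>h i\<bar> = \<bar>g i\<bar>" for i
    by (simp add: h_def)
  have val: "bt_val (m - 1) h = \<bar>bt_val m g\<bar>"
    using g(2) by (simp add: h_def bt_val_top_zero bt_val_uminus)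
  note near = digits_near_max[OF h L(1), unfolded val, OF L(2)]
  show "\<bar>g i\<bar> = 1" if "2 \<le> i" "i < m - 1" for i
    using near(1)[OF that] abs_h[of i] by simp
  assume nz: "\<forall>i<m - 1. g i \<noteq> 0" and m: "3 \<le> m" and dvd: "4 dvd bt_val m g" "4 dvd L"
  have h_nz: "h i \<in> {-1, 1}" if "i < m - 1" for i
    using h nz abs_h[of i] that by (auto simp: balanced_digits_def)
  have h_one: "h i = 1" if "1 \<le> i" "i < m - 1" for i
    using near h_nz[OF that(2)] that m by (cases "i = 1") auto
  have "L - \<bar>bt_val m g\<bar> = (\<Sum>i<m - 1. (1 - h i) * 3 ^ i)"
    using bt_val_deficit[OF L(1), of h] val by simp
  also have "\<dots> = (\<Sum>i\<in>{0}. (1 - h i) * 3 ^ i)"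
    using m h_one by (intro sum.mono_neutral_right) auto
  finally have "L - \<bar>bt_val m g\<bar> = 1 - h 0" by simp
  moreover have "h 0 \<in> {-1, 1}" using h_nz m by simp
  ultimately show "\<bar>bt_val m g\<bar> = L"
    using dvd by (auto, presburger)
qed

lemma near_max_shifts_nonzero_digits:
  assumes m: "5 \<le> m" and f: "balanced_digits m f" "f (m - 1) = 0"
    and L: "2 * L = 3 ^ (m - 1) - 1"
    and near: "\<And>r. L - 4 \<le> \<bar>bt_val m ((neg_shift m ^^ r) f)\<bar>"
    and i: "i < m - 1"
  shows "f i \<noteq> 0"
proof (cases "2 \<le> i")
  case True
  then show ?thesis
    using top_zero_near_max(1)[OF f L _ True i] near[of 0] by auto
next
  case False
  have m0: "0 < m" using m by simp
  show ?thesis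
  proof
    \<comment> \<open>rotate the zero digit \<open>i\<close> to the top; the old top zero lands in position \<open>m - 2 - i \<ge> 2\<close>\<close>
    assume fi: "f i = 0"
    define g where "g = (neg_shift m ^^ (m - 1 - i)) f"
    have g_bal: "balanced_digits m g"
      unfolding g_def by (rule balanced_digits_neg_shift_pow[OF m0 f(1)])
    have g_top: "g (m - 1) = 0"
      unfolding g_def using fi i by (subst neg_shift_pow_nth) auto
    have "g (m - 2 - i) = - f (m - (m - 1 - i) + (m - 2 - i))"
      unfolding g_def using i m False by (subst neg_shift_pow_nth) auto
    also have "m - (m - 1 - i) + (m - 2 - i) = m - 1"
      using i m False by arith
    finally have "g (m - 2 - i) = 0" using f(2) by simp
    moreover have "L - 4 \<le> \<bar>bt_val m g\<bar>"
      unfolding g_def by (rule near)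
    moreover have "2 \<le> m - 2 - i" "m - 2 - i < m - 1"
      using False m by auto
    ultimately show False
      using top_zero_near_max(1)[OF g_bal g_top L] by fastforce
  qed
qed

text \<open>Rotating a zero digit to the top, the remaining digits are forced to be nonzero.\<close>
lemma neg_shift_abs_bt_val_eq:
  assumes m: "odd m" "5 \<le> m" and e: "balanced_digits m e"
    and L: "2 * L = 3 ^ (m - 1) - 1" "4 dvd L"
    and near: "\<And>r. L - 4 \<le> \<bar>bt_val m ((neg_shift m ^^ r) e)\<bar>"
    and dvd: "\<And>r. 4 dvd bt_val m ((neg_shift m ^^ r) e)"
  obtains r where "\<bar>bt_val m ((neg_shift m ^^ r) e)\<bar> = L"
proof -
  have m0: "0 < m" using m by simp
  obtain p where p: "p < m" "e p = 0"
  proof (rule ccontr)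
    assume "\<not> thesis"
    then have "odd (bt_val m e)" using that odd_bt_val_iff[OF e] m by auto
    moreover have "4 dvd bt_val m e" using dvd[of 0] by simp
    ultimately show False by (metis dvd_trans even_numeral)
  qed
  define f where "f = (neg_shift m ^^ (m - 1 - p)) e"
  have f: "balanced_digits m f" "f (m - 1) = 0"
    unfolding f_def using p m0 balanced_digits_neg_shift_pow[OF m0 e]
    by (auto simp: neg_shift_pow_nth)
  have near_f: "L - 4 \<le> \<bar>bt_val m ((neg_shift m ^^ r) f)\<bar>" for r
    using near[of "r + (m - 1 - p)"] by (simp add: f_def funpow_add)
  have "\<bar>bt_val m f\<bar> = L"
    using top_zero_near_max(2)[OF f L(1) _ _ _ _ L(2)] near_f[of 0] dvd m
      near_max_shifts_nonzero_digits[OF m(2) f L(1) near_f]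
    unfolding f_def by auto
  then show ?thesis using that unfolding f_def by blast
qed

lemma abs_bt_val_less_neg_shift:
  assumes m: "0 < m" and e: "balanced_digits m e" "e (m - 1) = 0" "\<forall>i<m - 1. e i \<noteq> 0"
    and r: "r mod m \<noteq> 0"
  shows "\<bar>bt_val m e\<bar> < \<bar>bt_val m ((neg_shift m ^^ r) e)\<bar>"
proof -
  define g where "g = (neg_shift m ^^ (r mod m)) e"
  have "g (m - 1) = e (m - 1 - r mod m)"
    unfolding g_def using r mod_less_divisor[OF m, of r] by (subst neg_shift_pow_nth) auto
  also have "\<dots> \<noteq> 0"
  proof -
    have "m - 1 - r mod m < m - 1"
      using r mod_less_divisor[OF m, of r] by arith
    then show ?thesis using e(3) by blast
  qed
  finally have "3 ^ (m - 1) + 1 \<le> 2 * \<bar>bt_val m g\<bar>"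
    using abs_bt_val_ge_top_nonzero[OF m balanced_digits_neg_shift_pow[OF m e(1)]]
    unfolding g_def by blast
  moreover have "2 * \<bar>bt_val m e\<bar> \<le> 3 ^ (m - 1) - 1"
    using abs_bt_val_le[OF balanced_digits_mono[OF e(1), of "m - 1"]] e(2)
    by (simp add: bt_val_top_zero)
  ultimately show ?thesis
    unfolding g_def abs_bt_val_neg_shift_pow_mod[of m r e] by linarith
qed

lemma abs_bt_val_le_neg_shift:
  assumes "0 < m" "balanced_digits m e" "e (m - 1) = 0" "\<forall>i<m - 1. e i \<noteq> 0"
  shows "\<bar>bt_val m e\<bar> \<le> \<bar>bt_val m ((neg_shift m ^^ r) e)\<bar>"
  using abs_bt_val_less_neg_shift[OF assms, of r] abs_bt_val_neg_shift_pow_mod[of m r e]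
  by (cases "r mod m = 0") auto

definition mod_abs :: "nat \<Rightarrow> nat \<Rightarrow> nat" where
  "mod_abs n x = min (x mod n) (n - x mod n)"

text \<open>The bridge between cyclotomic cosets modulo \<open>n = (3^m + 1)/4\<close> and balanced ternary:
  if \<open>e\<close> represents \<open>4 s\<close> modulo \<open>3^m + 1\<close>, its shifts represent \<open>\<plusminus>4 s 3^r\<close>.\<close>
lemma four_mod_abs_eq_abs_bt_val:
  fixes n s :: nat
  assumes n: "4 * n = 3 ^ m + 1" and m: "0 < m" and e: "balanced_digits m e"
    and s: "[bt_val m e = 4 * int s] (mod (3 ^ m + 1))"
  shows "4 * int (mod_abs n (s * 3 ^ r)) = \<bar>bt_val m ((neg_shift m ^^ r) e)\<bar>"
proof -
  define w where "w = s * 3 ^ r mod n"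
  define y where "y = bt_val m ((neg_shift m ^^ r) e)"
  define M :: int where "M = 3 ^ m + 1"
  have M: "M = 4 * int n" using arg_cong[OF n, of int] unfolding M_def by simp
  have w: "w < n" unfolding w_def using n by simp
  have y: "2 * \<bar>y\<bar> \<le> M - 2"
    using abs_bt_val_le[OF balanced_digits_neg_shift_pow[OF m e]] unfolding y_def M_def by simp
  have "[y = 3 ^ r * bt_val m e] (mod M)"
    unfolding y_def M_def using m by (rule bt_val_neg_shift_pow_cong)
  also have "[3 ^ r * bt_val m e = 3 ^ r * (4 * int s)] (mod M)"
    using s unfolding M_def by (intro cong_mult) auto
  also have "3 ^ r * (4 * int s) = 4 * int (s * 3 ^ r)" by simp
  also have "[4 * int (s * 3 ^ r) = 4 * int w] (mod M)"
    unfolding M w_def cong_def by (simp add: of_nat_mod)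
  finally obtain q where q: "y - 4 * int w = M * q"
    by (metis cong_iff_dvd_diff dvd_def)
  have "M * q < M * 1" "M * (-2) < M * q"
    using q y w M by linarith+
  moreover have "0 < M" using M w by simp
  ultimately have "q = 0 \<or> q = -1"
    by (simp only: mult_less_cancel_left_pos) linarith
  then have "(y = 4 * int w \<and> 2 * w \<le> n) \<or> (y = 4 * int w - M \<and> n \<le> 2 * w)"
    using q y M w by auto
  then show ?thesis
    unfolding mod_abs_def w_def[symmetric] y_def[symmetric] using M w by (auto simp: of_nat_diff)
qed

section \<open>Cyclotomic cosets and coset leaders\<close>

lemma cyc_coset_finite: "finite (cyc_coset q n s)"
  unfolding cyc_coset_def by simp

lemma cyc_coset_mod: "x \<in> cyc_coset q n s \<Longrightarrow> x mod n = x"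
  unfolding cyc_coset_def by auto

lemma cyc_coset_less: "0 < n \<Longrightarrow> x \<in> cyc_coset q n s \<Longrightarrow> x < n"
  unfolding cyc_coset_def by auto

lemma cong_pow_mod_ord: "[q ^ r = q ^ (r mod ord n q)] (mod n)" for q n :: nat
proof -
  have "[(q ^ ord n q) ^ (r div ord n q) * q ^ (r mod ord n q) = 1 ^ (r div ord n q) * q ^ (r mod ord n q)] (mod n)"
    by (intro cong_mult cong_pow ord cong_refl)
  then show ?thesis
    by (simp flip: power_mult power_add)
qed

lemma cyc_coset_eq_range:
  assumes "coprime n q"
  shows "cyc_coset q n s = range (\<lambda>r. s * q ^ r mod n)"
proof (intro equalityI subsetI)
  fix x assume "x \<in> range (\<lambda>r. s * q ^ r mod n)"
  then obtain r where r: "x = s * q ^ r mod n" by auto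
  have "x = s * q ^ (r mod ord n q) mod n"
    unfolding r using cong_scalar_left[OF cong_pow_mod_ord, of s q r n] by (simp add: cong_def)
  moreover have "r mod ord n q < ord n q"
    using coprime_ord[OF assms] by simp
  ultimately show "x \<in> cyc_coset q n s"
    unfolding cyc_coset_def by blast
qed (auto simp: cyc_coset_def)

context
  fixes q n :: nat
  assumes coprime: "coprime n q"
begin

lemma cyc_coset_memI: "s * q ^ r mod n \<in> cyc_coset q n s"
  by (simp add: cyc_coset_eq_range[OF coprime])

lemma cyc_coset_self: "s < n \<Longrightarrow> s \<in> cyc_coset q n s"
  using cyc_coset_memI[of s 0] by simp

lemma cyc_coset_mult_pow: "x \<in> cyc_coset q n s \<Longrightarrow> x * q ^ j mod n \<in> cyc_coset q n s"
  by (auto simp: cyc_coset_eq_range[OF coprime] mod_mult_left_eq power_add mult.assoc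
      simp flip: power_add intro: cyc_coset_memI)

lemma cyc_coset_subset: "x \<in> cyc_coset q n s \<Longrightarrow> cyc_coset q n x \<subseteq> cyc_coset q n s"
  by (auto simp: cyc_coset_eq_range[OF coprime, of x] intro: cyc_coset_mult_pow)

lemma cyc_coset_sym:
  assumes "x \<in> cyc_coset q n s"
  shows "s mod n \<in> cyc_coset q n x"
proof -
  obtain r where r: "x = s * q ^ r mod n"
    using assms by (auto simp: cyc_coset_eq_range[OF coprime])
  have o: "0 < ord n q" using coprime_ord[OF coprime] by simp
  define j where "j = ord n q - r mod ord n q"
  have "r + j = ord n q * (r div ord n q + 1)"
    using mult_div_mod_eq[of "ord n q" r] mod_less_divisor[OF o, of r]
    unfolding j_def distrib_left mult_1_right by arith
  then have "(r + j) mod ord n q = 0" by simp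
  then have "[q ^ (r + j) = 1] (mod n)"
    using cong_pow_mod_ord[of q "r + j" n] by simp
  then have "[s * q ^ (r + j) = s * 1] (mod n)"
    by (rule cong_scalar_left)
  then have "x * q ^ j mod n = s mod n"
    unfolding r by (simp add: cong_def mod_mult_left_eq power_add mult.assoc)
  then show ?thesis
    using cyc_coset_memI[of x j] by simp
qed

lemma cyc_coset_eq: "s < n \<Longrightarrow> x \<in> cyc_coset q n s \<Longrightarrow> cyc_coset q n x = cyc_coset q n s"
  using cyc_coset_subset cyc_coset_sym[of x s] cyc_coset_subset[of s x] by auto

lemma cyc_coset_pos:
  assumes "0 < s" "s < n" "x \<in> cyc_coset q n s"
  shows "0 < x"
proof (rule ccontr)
  obtain r where r: "x = s * q ^ r mod n"
    using assms(3) by (auto simp: cyc_coset_eq_range[OF coprime])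
  assume "\<not> 0 < x"
  then have "n dvd s * q ^ r" using r by auto
  then have "n dvd s" using coprime by (simp add: coprime_dvd_mult_left_iff)
  then show False using assms by auto
qed

lemma cyc_coset_times_image: "(\<lambda>l. l * q mod n) ` cyc_coset q n s = cyc_coset q n s"
proof (rule endo_inj_surj[OF cyc_coset_finite])
  show "(\<lambda>l. l * q mod n) ` cyc_coset q n s \<subseteq> cyc_coset q n s"
    using cyc_coset_mult_pow[of _ s 1] by auto
  show "inj_on (\<lambda>l. l * q mod n) (cyc_coset q n s)"
  proof (rule inj_onI)
    fix x y assume xy: "x \<in> cyc_coset q n s" "y \<in> cyc_coset q n s" "x * q mod n = y * q mod n"
    then have "[x = y] (mod n)"
      using coprime by (simp add: cong_def[symmetric] cong_mult_rcancel_nat coprime_commute)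
    then show "x = y"
      using xy cyc_coset_mod by (simp add: cong_def)
  qed
qed

lemma Min_cyc_coset: "s < n \<Longrightarrow> (\<And>x. x \<in> cyc_coset q n s \<Longrightarrow> s \<le> x) \<Longrightarrow> Min (cyc_coset q n s) = s"
  by (intro Min_eqI cyc_coset_finite) (auto intro: cyc_coset_self)

end

lemma finite_MinRep: "finite (MinRep q n)"
  by (rule finite_subset[of _ "{..<n}"]) (auto simp: MinRep_def)

lemma card_above_MinRep_less:
  assumes "x < x'" "x' \<in> MinRep q n"
  shows "card {y \<in> MinRep q n. x' < y} < card {y \<in> MinRep q n. x < y}"
proof (rule psubset_card_mono)
  show "finite {y \<in> MinRep q n. x < y}"
    using finite_MinRep by simp
  have "{y \<in> MinRep q n. x' < y} \<subseteq> {y \<in> MinRep q n. x < y}"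
    using assms(1) by auto
  moreover have "x' \<in> {y \<in> MinRep q n. x < y} - {y \<in> MinRep q n. x' < y}"
    using assms by auto
  ultimately show "{y \<in> MinRep q n. x' < y} \<subset> {y \<in> MinRep q n. x < y}"
    by blast
qed

lemma delta_idx_eqI:
  assumes x: "x \<in> MinRep q n" "card {y \<in> MinRep q n. x < y} = i - 1"
  shows "delta_idx q i n = x"
  unfolding delta_idx_def
proof (rule the_equality)
  fix x' assume x': "x' \<in> MinRep q n \<and> card {y \<in> MinRep q n. x' < y} = i - 1"
  show "x' = x"
  proof (rule ccontr)
    assume "x' \<noteq> x"
    then consider "x < x'" | "x' < x" by arith
    then show False
      using card_above_MinRep_less[of x x' q n] card_above_MinRep_less[of x' x q n] x x'
      by cases auto
  qed
qed (use x in simp)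

section \<open>The length \<open>n = (3^m + 1)/4\<close>\<close>

lemma eight_times_less_three_pow: "4 \<le> k \<Longrightarrow> 8 * k < (3::nat) ^ k"
  by (induction k rule: nat_induct_at_least) auto

locale ternary_length =
  fixes m n :: nat
  assumes m_odd: "odd m" and m_ge: "5 \<le> m" and n_def: "n = (3 ^ m + 1) div 4"
begin

text \<open>The largest coset leader; the second largest is \<open>d1 - 2\<close>.\<close>
definition d1 :: nat where "d1 = (3 ^ (m - 1) - 1) div 8"

lemma three_pow_m_minus_1: "3 ^ (m - 1) = 8 * d1 + 1"
proof -
  have "m - 1 = 2 * (m div 2)" using m_odd by presburger
  then have "3 ^ (m - 1) = (9::nat) ^ (m div 2)" by (simp add: power_mult)
  moreover have "[(9::nat) ^ (m div 2) = 1 ^ (m div 2)] (mod 8)"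
    by (rule cong_pow) (simp add: cong_def)
  ultimately have "3 ^ (m - 1) mod 8 = (1::nat)" by (simp add: cong_def)
  then show ?thesis unfolding d1_def by presburger
qed

lemma three_pow_m: "3 ^ m = 24 * d1 + 3"
proof -
  have "(3::nat) ^ m = 3 * 3 ^ (m - 1)" using m_ge by (simp flip: power_Suc)
  then show ?thesis using three_pow_m_minus_1 by simp
qed

lemma n_eq: "n = 6 * d1 + 1"
  unfolding n_def three_pow_m by simp

lemma four_n: "4 * n = 3 ^ m + 1"
  unfolding n_eq three_pow_m by simp

lemma three_pow_m_int: "(3::int) ^ m = 4 * int n - 1"
  using arg_cong[OF four_n, of int] by simp

lemma d1_ge: "10 \<le> d1"
proof -
  have "(3::nat) ^ 4 \<le> 3 ^ (m - 1)" using m_ge by (intro power_increasing) auto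
  then show ?thesis using three_pow_m_minus_1 by simp
qed

lemma d1_less: "d1 < n"
  using n_eq by simp

lemma two_m_less: "2 * m < n"
  using eight_times_less_three_pow[of m] m_ge four_n by simp

lemma n_coprime_3: "coprime n 3"
proof -
  have "\<not> 3 dvd n" using n_eq by presburger
  then have "coprime 3 n" by (intro prime_imp_coprime) auto
  then show ?thesis by (simp add: coprime_commute)
qed

lemma three_pow_m_mod: "3 ^ m mod n = n - 1"
proof -
  have "(3::nat) ^ m = (n - 1) + n * 3" using three_pow_m n_eq by simp
  then show ?thesis using n_eq by (simp only: mod_mult_self2) simp
qed

lemma three_pow_mod_neq_1:
  assumes k: "0 < k" "k \<le> m"
  shows "3 ^ k mod n \<noteq> 1"
proof -
  consider "k \<le> m - 2" | "k = m - 1" | "k = m" using k by linarith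
  then show ?thesis
  proof cases
    case 1
    have "(3::nat) ^ k \<le> 3 ^ (m - 2)" using 1 by (intro power_increasing) auto
    moreover have "m - 2 + 2 = m" using m_ge by simp
    then have "(3::nat) ^ m = 3 ^ (m - 2) * 3 ^ 2"
      by (simp only: power_add[symmetric])
    then have "(3::nat) ^ m = 3 ^ (m - 2) * 9" by simp
    ultimately have "(3::nat) ^ k < n" using four_n by linarith
    then show ?thesis using k(1) by simp
  next
    case 2
    have "3 ^ k = 2 * d1 + n"
      using 2 three_pow_m_minus_1 n_eq by simp
    then have "3 ^ k mod n = 2 * d1"
      by (simp only: mod_add_self2) (simp add: n_eq)
    then show ?thesis using d1_ge by simp
  next
    case 3
    then show ?thesis using three_pow_m_mod n_eq d1_ge by simp
  qed
qed

lemma ord_3: "ord n 3 = 2 * m"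
proof -
  have "[int 3 ^ m = -1] (mod int n)"
    using three_pow_m_int by (simp add: cong_iff_dvd_diff)
  then have "[(int 3 ^ m) ^ 2 = (-1) ^ 2] (mod int n)" by (rule cong_pow)
  then have "[3 ^ (2 * m) = 1] (mod n)"
    by (simp add: power_mult[symmetric] mult.commute flip: cong_int_iff)
  then have "ord n 3 dvd 2 * m" by (rule ord_divides[THEN iffD1])
  then obtain k where k: "2 * m = ord n 3 * k" by (auto elim: dvdE)
  have pos: "0 < ord n 3" using coprime_ord[OF n_coprime_3] by simp
  have one: "3 ^ ord n 3 mod n = 1" using ord[of 3 n] n_eq d1_ge by (simp add: cong_def)
  show ?thesis
  proof (rule ccontr)
    assume "ord n 3 \<noteq> 2 * m"
    then have "k \<noteq> 1" using k by auto
    moreover have "k \<noteq> 0" using k m_ge by (intro notI) simp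
    ultimately have "2 \<le> k" by arith
    then have "ord n 3 * 2 \<le> ord n 3 * k" by simp
    then have "ord n 3 \<le> m" using k by linarith
    then show False using three_pow_mod_neq_1[OF pos] one by simp
  qed
qed

abbreviation C :: "nat \<Rightarrow> nat set" where
  "C s \<equiv> cyc_coset 3 n s"

lemma n_gt_0: "0 < n"
  using n_eq by simp

lemmas coset_eq_range = cyc_coset_eq_range[OF n_coprime_3]
  and coset_memI = cyc_coset_memI[OF n_coprime_3]
  and coset_self = cyc_coset_self[OF n_coprime_3]
  and coset_sym = cyc_coset_sym[OF n_coprime_3]
  and coset_eq = cyc_coset_eq[OF n_coprime_3]
  and coset_pos = cyc_coset_pos[OF n_coprime_3]
  and coset_less = cyc_coset_less[OF n_gt_0]

lemma mult_three_pow_m_mod: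
  assumes "0 < x" "x < n"
  shows "x * 3 ^ m mod n = n - x"
proof -
  have "int (x * 3 ^ m) = int x * (4 * int n - 1)"
    using three_pow_m_int by simp
  also have "\<dots> = - int x + (4 * int x) * int n"
    by (simp add: algebra_simps)
  finally have "int (x * 3 ^ m) = - int x + (4 * int x) * int n" .
  then have "int (x * 3 ^ m) mod int n = (- int x) mod int n"
    by (simp only: mod_mult_self1)
  also have "\<dots> = int (n - x)"
    using assms by (simp add: zmod_zminus1_eq_if of_nat_diff)
  finally have "int (x * 3 ^ m mod n) = int (n - x)"
    by (simp only: of_nat_mod)
  then show ?thesis
    by (simp only: of_nat_eq_iff)
qed

lemma coset_minus:
  assumes "0 < s" "s < n" "x \<in> C s"
  shows "n - x \<in> C s"
  using cyc_coset_mult_pow[OF n_coprime_3 assms(3), of m] coset_pos[OF assms] coset_less[OF assms(3)]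
  by (simp add: mult_three_pow_m_mod)

lemma mod_abs_in_coset:
  assumes "0 < s" "s < n"
  shows "mod_abs n (s * 3 ^ r) \<in> C s"
  using coset_memI[of s r] coset_minus[OF assms coset_memI[of s r]] by (simp add: mod_abs_def min_def)

lemma four_mod_abs_eq:
  "balanced_digits m e \<Longrightarrow> [bt_val m e = 4 * int s] (mod (3 ^ m + 1)) \<Longrightarrow>
    4 * int (mod_abs n (s * 3 ^ r)) = \<bar>bt_val m ((neg_shift m ^^ r) e)\<bar>"
  using four_mod_abs_eq_abs_bt_val[OF four_n] m_ge by simp

lemma balanced_digits_four_times:
  assumes "s < n"
  obtains e where "balanced_digits m e" "[bt_val m e = 4 * int s] (mod (3 ^ m + 1))"
proof -
  define y :: int where "y = (if 2 * s < n then 4 * int s else 4 * int s - 4 * int n)"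
  have "2 * s \<noteq> n" using n_eq by presburger
  then have "2 * int s < int n \<or> int n < 2 * int s" by linarith
  then have "2 * \<bar>y\<bar> \<le> 3 ^ m - 1"
    using assms three_pow_m_int unfolding y_def by auto
  then obtain e where "balanced_digits m e" "bt_val m e = y"
    using balanced_digits_exist by blast
  moreover have "[y = 4 * int s] (mod (3 ^ m + 1))"
    using three_pow_m_int unfolding y_def by (auto simp: cong_iff_dvd_diff)
  ultimately show ?thesis using that by simp
qed

text \<open>Digit vectors of \<open>4 d1 = (3^(m-1) - 1)/2\<close> and \<open>4 (d1 - 2)\<close>: nonzero below the
  top digit, so no negacyclic shift has smaller absolute value.\<close>
definition d1_digits :: "nat \<Rightarrow> int" where
  "d1_digits i = (if i < m - 1 then 1 else 0)"

definition d1_minus_2_digits :: "nat \<Rightarrow> int" where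
  "d1_minus_2_digits i = (if i < 2 then -1 else if i < m - 1 then 1 else 0)"

lemma d1_digits:
  "balanced_digits m d1_digits" "d1_digits (m - 1) = 0" "\<forall>i<m - 1. d1_digits i \<noteq> 0"
  "bt_val m d1_digits = int (4 * d1)"
proof -
  show "balanced_digits m d1_digits" "d1_digits (m - 1) = 0" "\<forall>i<m - 1. d1_digits i \<noteq> 0"
    by (auto simp: balanced_digits_def d1_digits_def)
  have "bt_val m d1_digits = bt_val (m - 1) d1_digits"
    by (rule bt_val_top_zero) (simp add: d1_digits_def)
  also have "\<dots> = (\<Sum>i<m - 1. 3 ^ i)"
    unfolding bt_val_def by (intro sum.cong) (auto simp: d1_digits_def)
  finally have "bt_val m d1_digits = (\<Sum>i<m - 1. 3 ^ i)" .
  moreover have "(3::int) ^ (m - 1) = 8 * int d1 + 1"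
    using arg_cong[OF three_pow_m_minus_1, of int] by simp
  ultimately show "bt_val m d1_digits = int (4 * d1)"
    using sum_three_powers[of "m - 1"] by simp
qed

lemma d1_minus_2_digits:
  "balanced_digits m d1_minus_2_digits" "d1_minus_2_digits (m - 1) = 0"
  "\<forall>i<m - 1. d1_minus_2_digits i \<noteq> 0" "bt_val m d1_minus_2_digits = int (4 * (d1 - 2))"
proof -
  show "balanced_digits m d1_minus_2_digits" "d1_minus_2_digits (m - 1) = 0"
    "\<forall>i<m - 1. d1_minus_2_digits i \<noteq> 0"
    using m_ge by (auto simp: balanced_digits_def d1_minus_2_digits_def)
  have "bt_val m d1_digits - bt_val m d1_minus_2_digits
      = (\<Sum>i<m. (d1_digits i - d1_minus_2_digits i) * 3 ^ i)"
    unfolding bt_val_def by (simp add: sum_subtractf algebra_simps)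
  also have "\<dots> = (\<Sum>i<2. (d1_digits i - d1_minus_2_digits i) * 3 ^ i)"
    using m_ge by (intro sum.mono_neutral_right) (auto simp: d1_digits_def d1_minus_2_digits_def)
  also have "\<dots> = 8"
    using m_ge by (simp add: d1_digits_def d1_minus_2_digits_def numeral_2_eq_2)
  finally show "bt_val m d1_minus_2_digits = int (4 * (d1 - 2))"
    using d1_digits(4) d1_ge by simp
qed

lemma coset_ge_of_digits:
  assumes e: "balanced_digits m e" "e (m - 1) = 0" "\<forall>i<m - 1. e i \<noteq> 0"
    and s: "bt_val m e = int (4 * s)" and x: "x \<in> C s"
  shows "s \<le> x"
proof -
  obtain r where r: "x = s * 3 ^ r mod n"
    using x by (auto simp: coset_eq_range)
  have "4 * int (mod_abs n (s * 3 ^ r)) = \<bar>bt_val m ((neg_shift m ^^ r) e)\<bar>"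
    using four_mod_abs_eq[OF e(1)] s by simp
  moreover have "\<bar>bt_val m e\<bar> \<le> \<bar>bt_val m ((neg_shift m ^^ r) e)\<bar>"
    using m_ge by (intro abs_bt_val_le_neg_shift[OF _ e]) simp
  ultimately have "s \<le> mod_abs n (s * 3 ^ r)"
    using s by simp
  then show ?thesis
    unfolding r mod_abs_def by simp
qed

lemma d1_le_coset: "x \<in> C d1 \<Longrightarrow> d1 \<le> x"
  using coset_ge_of_digits[OF d1_digits] by blast

lemma d1_minus_2_le_coset: "x \<in> C (d1 - 2) \<Longrightarrow> d1 - 2 \<le> x"
  using coset_ge_of_digits[OF d1_minus_2_digits] by blast

lemma d1_in_coset:
  assumes s: "0 < s" "s < n" and large: "\<And>x. x \<in> C s \<Longrightarrow> d1 - 1 \<le> x"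
  shows "d1 \<in> C s"
proof -
  obtain e where e: "balanced_digits m e" "[bt_val m e = 4 * int s] (mod (3 ^ m + 1))"
    using balanced_digits_four_times[OF s(2)] .
  note shifts = four_mod_abs_eq[OF e]
  have "int (4 * d1) - 4 \<le> \<bar>bt_val m ((neg_shift m ^^ r) e)\<bar>" for r
    using large[OF mod_abs_in_coset[OF s, of r]] shifts[of r] d1_ge by linarith
  moreover have "4 dvd bt_val m ((neg_shift m ^^ r) e)" for r
    using shifts[of r] by (metis dvd_abs_iff dvd_triv_left)
  moreover have "2 * int (4 * d1) = 3 ^ (m - 1) - 1"
    using arg_cong[OF three_pow_m_minus_1, of int] by simp
  moreover have "4 dvd int (4 * d1)" by simp
  ultimately obtain r where "\<bar>bt_val m ((neg_shift m ^^ r) e)\<bar> = int (4 * d1)"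
    using neg_shift_abs_bt_val_eq[OF m_odd m_ge e(1)] by blast
  then have "mod_abs n (s * 3 ^ r) = d1"
    using shifts[of r] by simp
  then show ?thesis
    using mod_abs_in_coset[OF s, of r] by simp
qed

lemma d1_mult_three_pow_mod_neq:
  assumes k: "0 < k" "k < 2 * m"
  shows "d1 * 3 ^ k mod n \<noteq> d1"
proof
  assume fixed: "d1 * 3 ^ k mod n = d1"
  have "4 * int (mod_abs n (d1 * 3 ^ k)) = \<bar>bt_val m ((neg_shift m ^^ k) d1_digits)\<bar>"
    using four_mod_abs_eq[OF d1_digits(1)] d1_digits(4) by simp
  moreover have "mod_abs n (d1 * 3 ^ k) = d1"
    using fixed n_eq by (simp add: mod_abs_def)
  ultimately have eq: "\<bar>bt_val m ((neg_shift m ^^ k) d1_digits)\<bar> = \<bar>bt_val m d1_digits\<bar>"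
    using d1_digits(4) by simp
  have "k mod m = 0"
  proof (rule ccontr)
    assume "k mod m \<noteq> 0"
    then show False
      using abs_bt_val_less_neg_shift[OF _ d1_digits(1-3), of k] m_ge eq by simp
  qed
  then obtain q where q: "k = m * q" by (auto simp: mod_eq_0_iff_dvd elim: dvdE)
  then have "q \<noteq> 0" "m * q < m * 2" using k by auto
  then have "k = m" using q by simp
  then show False
    using fixed mult_three_pow_m_mod[OF _ d1_less] d1_ge n_eq by simp
qed

lemma card_coset_d1: "card (C d1) = 2 * m"
proof -
  have "inj_on (\<lambda>i. d1 * 3 ^ i mod n) {..<2 * m}"
  proof (rule ccontr)
    assume "\<not> ?thesis"
    then obtain i j where ij: "i < j" "j < 2 * m" "d1 * 3 ^ i mod n = d1 * 3 ^ j mod n"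
      unfolding inj_on_def by (metis lessThan_iff nat_neq_iff)
    have "[d1 * 3 ^ (j - i) * 3 ^ i = d1 * 3 ^ i] (mod n)"
      using ij unfolding cong_def by (simp add: mult.assoc flip: power_add)
    moreover have "coprime (3 ^ i) n" using n_coprime_3 by (simp add: coprime_commute)
    ultimately have "[d1 * 3 ^ (j - i) = d1] (mod n)"
      by (metis cong_mult_rcancel_nat mult_1)
    then have "d1 * 3 ^ (j - i) mod n = d1"
      using d1_less by (simp add: cong_def)
    then show False
      using d1_mult_three_pow_mod_neq[of "j - i"] ij by simp
  qed
  moreover have "C d1 = (\<lambda>i. d1 * 3 ^ i mod n) ` {..<2 * m}"
    unfolding cyc_coset_def ord_3 by auto
  ultimately show ?thesis
    by (simp add: card_image)
qed

lemma small_in_coset: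
  assumes x: "0 < x" "x < n" "x \<notin> C d1"
  obtains y where "y \<in> C x" "0 < y" "y \<le> d1 - 2"
proof -
  have "\<not> (\<forall>y\<in>C x. d1 - 1 \<le> y)"
  proof
    assume "\<forall>y\<in>C x. d1 - 1 \<le> y"
    then have "C d1 = C x"
      using d1_in_coset[OF x(1,2)] coset_eq[OF x(2)] by blast
    then show False
      using x coset_self[OF x(2)] by simp
  qed
  then show ?thesis
    using that coset_pos[OF x(1,2)] by fastforce
qed

lemma d1_MinRep: "d1 \<in> MinRep 3 n"
  unfolding MinRep_def using Min_cyc_coset[OF n_coprime_3 d1_less] d1_le_coset d1_less by auto

lemma d1_minus_2_MinRep: "d1 - 2 \<in> MinRep 3 n"
  using Min_cyc_coset[OF n_coprime_3, of "d1 - 2"] d1_minus_2_le_coset d1_less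
  unfolding MinRep_def by auto

lemma MinRep_le:
  assumes x: "x \<in> MinRep 3 n" "x \<noteq> d1"
  shows "x \<le> d1 - 2"
proof -
  have x_min: "x < n" "x = Min (C x)"
    using x(1) unfolding MinRep_def by auto
  consider "x = 0" | "x \<in> C d1" | "0 < x" "x \<notin> C d1" by blast
  then show ?thesis
  proof cases
    case 2
    then have "C x = C d1" "d1 \<le> x"
      using coset_eq[OF d1_less] d1_le_coset by auto
    then have "x \<le> d1"
      using x_min Min_le[OF cyc_coset_finite coset_self[OF d1_less]] by simp
    then show ?thesis using x(2) \<open>d1 \<le> x\<close> by simp
  next
    case 3
    then obtain y where "y \<in> C x" "y \<le> d1 - 2"
      using small_in_coset x_min(1) by blast
    then show ?thesis
      using x_min Min_le[OF cyc_coset_finite] by (metis order.trans)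
  qed simp
qed

lemma delta_idx_1: "delta_idx 3 1 n = d1"
proof (rule delta_idx_eqI[OF d1_MinRep])
  have none: "{y \<in> MinRep 3 n. d1 < y} = {}"
    using MinRep_le by fastforce
  show "card {y \<in> MinRep 3 n. d1 < y} = 1 - 1"
    unfolding none by simp
qed

lemma delta_idx_2: "delta_idx 3 2 n = d1 - 2"
proof (rule delta_idx_eqI[OF d1_minus_2_MinRep])
  have only_d1: "{y \<in> MinRep 3 n. d1 - 2 < y} = {d1}"
    using MinRep_le d1_MinRep d1_ge by fastforce
  show "card {y \<in> MinRep 3 n. d1 - 2 < y} = 2 - 1"
    unfolding only_d1 by simp
qed

lemma union_cosets_eq:
  assumes D: "d1 - 2 \<le> D" "D < d1"
  shows "(\<Union>i\<in>{1..D}. C i) = {1..<n} - C d1"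
proof (intro equalityI subsetI)
  fix j assume "j \<in> (\<Union>i\<in>{1..D}. C i)"
  then obtain i where i: "1 \<le> i" "i \<le> D" "j \<in> C i" by auto
  have "i < n" using i D d1_less by simp
  then have j: "0 < j" "j < n" using coset_pos[OF _ _ i(3)] i coset_less[OF i(3)] by auto
  have "j \<notin> C d1"
  proof
    assume "j \<in> C d1"
    then have "C i = C d1"
      using coset_eq[OF d1_less] coset_eq[OF \<open>i < n\<close> i(3)] by simp
    then show False
      using d1_le_coset coset_self[OF \<open>i < n\<close>] i D by fastforce
  qed
  then show "j \<in> {1..<n} - C d1" using j by auto
next
  fix j assume "j \<in> {1..<n} - C d1"
  then obtain y where y: "y \<in> C j" "0 < y" "y \<le> d1 - 2"
    using small_in_coset[of j] by auto
  have "j \<in> C y"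
    using coset_sym[OF y(1)] \<open>j \<in> {1..<n} - C d1\<close> by simp
  then show "j \<in> (\<Union>i\<in>{1..D}. C i)"
    using y D by auto
qed

lemma minus_notin_coset_d1:
  assumes "j \<in> {1..<n} - C d1"
  shows "n - j \<in> {1..<n} - C d1"
proof -
  have "n - j \<notin> C d1"
    using coset_minus[OF _ d1_less, of "n - j"] d1_ge assms by auto
  then show ?thesis using assms by auto
qed

lemma card_complement_coset_d1: "card ({1..<n} - C d1) = n - 1 - 2 * m"
proof -
  have "C d1 \<subseteq> {1..<n}"
    using coset_pos[OF _ d1_less] coset_less d1_ge by force
  then show ?thesis
    using card_coset_d1 by (simp add: card_Diff_subset finite_subset)
qed

end

section \<open>Polynomials over \<open>F\<^sub>3\<close> and cyclic codes\<close>

lemma to_int_mod_ring_F3: "to_int_mod_ring (x :: F3) \<in> {0, 1, 2}"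
proof -
  have "to_int_mod_ring x \<in> range (to_int_mod_ring :: F3 \<Rightarrow> int)" by simp
  also have "\<dots> = {0..<3}"
    using range_to_int_mod_ring[where 'a = three] by (simp add: card_three)
  finally have "to_int_mod_ring x \<in> {0..<3}" .
  moreover have "{0..<3} = {0, 1, 2::int}" by auto
  ultimately show ?thesis by simp
qed

lemma field_hom_emb3:
  assumes "CHAR('k::field) = 3"
  shows "field_hom (emb3 :: F3 \<Rightarrow> 'k)"
proof
  have m: "of_int (a mod 3) = (of_int a :: 'k)" for a
    using of_int_mod_CHAR[of a, where 'a = 'k] assms by simp
  fix x y :: F3
  show "emb3 (x * y) = (emb3 x * emb3 y :: 'k)"
    unfolding emb3_def to_int_mod_ring_mult card_three using m by simp
  show "emb3 (x + y) = (emb3 x + emb3 y :: 'k)"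
    unfolding emb3_def to_int_mod_ring_add card_three using m by simp
qed (simp_all add: emb3_def)

lemma add_cube_char3:
  assumes "CHAR('k::field) = 3"
  shows "((u::'k) + v) ^ 3 = u ^ 3 + v ^ 3"
proof -
  have "(3::'k) = 0" using of_nat_CHAR[where 'a = 'k] assms by simp
  moreover have "(u + v) ^ 3 = u ^ 3 + v ^ 3 + 3 * (u * v * (u + v))"
    by (simp add: power3_eq_cube algebra_simps)
  ultimately show ?thesis by simp
qed

lemma emb3_cube:
  assumes "CHAR('k::field) = 3"
  shows "(emb3 a :: 'k) ^ 3 = emb3 a"
proof -
  define t where "t = to_int_mod_ring a"
  have "t ^ 3 mod 3 = t"
    using to_int_mod_ring_F3[of a] unfolding t_def by auto
  then have "(of_int (t ^ 3) :: 'k) = of_int t"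
    using of_int_mod_CHAR[of "t ^ 3", where 'a = 'k] assms by simp
  then show ?thesis unfolding emb3_def t_def by simp
qed

lemma cube_eq_self_in_range_emb3:
  assumes "CHAR('k::field) = 3" and "(x::'k) ^ 3 = x"
  shows "x \<in> range emb3"
proof -
  interpret field_hom "emb3 :: F3 \<Rightarrow> 'k" by (rule field_hom_emb3[OF assms(1)])
  have "x * (x - 1) * (x + 1) = 0"
    using assms(2) by (simp add: power3_eq_cube algebra_simps)
  then have "x = emb3 0 \<or> x = emb3 1 \<or> x = emb3 (-1)"
    by (auto simp: eq_neg_iff_add_eq_0 hom_uminus)
  then show ?thesis by blast
qed

definition lin_prod :: "'a set \<Rightarrow> 'a::idom poly" where
  "lin_prod A = (\<Prod>a\<in>A. [:-a, 1:])"

lemma degree_lin_prod: "finite A \<Longrightarrow> degree (lin_prod A) = card A"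
  unfolding lin_prod_def by (subst degree_prod_sum_eq) auto

lemma roots_lin_prod: "finite A \<Longrightarrow> {x. poly (lin_prod A) x = 0} = A"
  unfolding lin_prod_def by (auto simp: poly_prod)

lemma lin_prod_nonzero: "finite A \<Longrightarrow> lin_prod A \<noteq> 0"
  unfolding lin_prod_def by auto

lemma monic_lin_prod: "monic (lin_prod A)"
  unfolding lin_prod_def by (simp add: lead_coeff_prod)

lemma degree_eq_card_roots_if_dvd_lin_prod:
  fixes p :: "'a::idom poly"
  assumes A: "finite A" and dvd: "p dvd lin_prod A"
  shows "degree p = card {x. poly p x = 0}"
proof -
  obtain r where r: "lin_prod A = p * r" using dvd by blast
  have nz: "p \<noteq> 0" "r \<noteq> 0" using r lin_prod_nonzero[OF A] by auto
  have "A = {x. poly p x = 0} \<union> {x. poly r x = 0}"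
    using roots_lin_prod[OF A] r by auto
  then have "card A \<le> card {x. poly p x = 0} + card {x. poly r x = 0}"
    by (metis card_Un_le)
  moreover have "card A = degree p + degree r"
    using r degree_lin_prod[OF A] nz by (simp add: degree_mult_eq)
  ultimately show ?thesis
    using poly_roots_degree[OF nz(1)] poly_roots_degree[OF nz(2)] by linarith
qed

lemma eq_lin_prod_if_roots:
  fixes p :: "'a::idom poly"
  assumes A: "finite A" and p: "monic p" "degree p = card A" and roots: "\<And>a. a \<in> A \<Longrightarrow> poly p a = 0"
  shows "p = lin_prod A"
proof (rule ccontr)
  define D where "D = p - lin_prod A"
  assume "p \<noteq> lin_prod A"
  then have D0: "D \<noteq> 0" unfolding D_def by simp
  have "coeff D (card A) = 0" "degree D \<le> card A"
    unfolding D_def using p monic_lin_prod[of A] degree_lin_prod[OF A]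
    by (simp_all add: degree_diff_le)
  then have "degree D < card A"
    using D0 by (metis le_neq_implies_less leading_coeff_0_iff)
  moreover have "A \<subseteq> {x. poly D x = 0}"
    unfolding D_def using roots roots_lin_prod[OF A] by auto
  then have "card A \<le> card {x. poly D x = 0}"
    by (intro card_mono poly_roots_finite[OF D0])
  also have "\<dots> \<le> degree D"
    by (rule poly_roots_degree[OF D0])
  ultimately show False by simp
qed

lemma vandermonde_kernel:
  fixes x u :: "nat \<Rightarrow> 'a::field"
  assumes S: "finite S" and inj: "inj_on x S" and nz: "\<And>j. j \<in> S \<Longrightarrow> x j \<noteq> 0"
    and eq: "\<And>k. k < card S \<Longrightarrow> (\<Sum>j\<in>S. u j * x j ^ (b + k)) = 0"
    and j0: "j0 \<in> S"
  shows "u j0 = 0"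
proof -
  define L where "L = (\<Prod>j\<in>S - {j0}. [:- x j, 1:])"
  have deg: "degree L = card S - 1"
    unfolding L_def using S j0 by (subst degree_prod_sum_eq) auto
  have "0 < card S" using S j0 card_gt_0_iff by blast
  then have "coeff L t * (\<Sum>j\<in>S. u j * x j ^ (b + t)) = 0" if "t \<le> degree L" for t
    using eq[of t] that deg by simp
  then have "(\<Sum>t\<le>degree L. coeff L t * (\<Sum>j\<in>S. u j * x j ^ (b + t))) = 0"
    by (intro sum.neutral) simp
  also have "(\<Sum>t\<le>degree L. coeff L t * (\<Sum>j\<in>S. u j * x j ^ (b + t)))
      = (\<Sum>j\<in>S. u j * x j ^ b * poly L (x j))"
    by (simp add: poly_altdef sum_distrib_left sum_distrib_right power_add mult_ac sum.swap[of _ S])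
  also have "\<dots> = u j0 * x j0 ^ b * poly L (x j0) + (\<Sum>j\<in>S - {j0}. u j * x j ^ b * poly L (x j))"
    using S j0 by (simp add: sum.remove)
  also have "(\<Sum>j\<in>S - {j0}. u j * x j ^ b * poly L (x j)) = 0"
    unfolding L_def using S by (intro sum.neutral) (auto simp: poly_prod)
  finally have "u j0 * x j0 ^ b * poly L (x j0) = 0" by simp
  moreover have "poly L (x j0) \<noteq> 0"
    unfolding L_def poly_prod using S j0 inj by (auto simp: inj_on_def)
  ultimately show "u j0 = 0"
    using nz[OF j0] by simp
qed

definition xn_minus_1 :: "nat \<Rightarrow> F3 poly" where
  "xn_minus_1 n = [:-1:] + monom 1 n"

lemma degree_xn_minus_1: "0 < n \<Longrightarrow> degree (xn_minus_1 n) = n"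
  unfolding xn_minus_1_def by (simp add: degree_add_eq_right degree_monom_eq)

lemma xn_minus_1_nonzero:
  assumes "0 < n"
  shows "xn_minus_1 n \<noteq> 0"
proof
  assume "xn_minus_1 n = 0"
  then show False using degree_xn_minus_1[OF assms] assms by simp
qed

lemma cyclic_code_iff:
  assumes n: "0 < n" and g: "g dvd xn_minus_1 n"
  shows "c \<in> cyclic_code n g \<longleftrightarrow> degree c < n \<and> g dvd c"
proof
  assume "c \<in> cyclic_code n g"
  then obtain a where c: "degree c < n" "[c = g * a] (mod xn_minus_1 n)"
    unfolding cyclic_code_def xn_minus_1_def by blast
  have "c = c mod xn_minus_1 n"
    using c(1) degree_xn_minus_1[OF n] by (simp add: mod_poly_less)
  also have "\<dots> = (g * a) mod xn_minus_1 n"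
    using c(2) by (simp add: cong_def)
  finally show "degree c < n \<and> g dvd c"
    using c(1) g by (metis dvd_mod dvd_triv_left)
next
  assume "degree c < n \<and> g dvd c"
  then show "c \<in> cyclic_code n g"
    unfolding cyclic_code_def by (auto intro: cong_refl)
qed

interpretation poly3: vector_space "smult :: F3 \<Rightarrow> F3 poly \<Rightarrow> F3 poly"
  by unfold_locales (simp_all add: smult_add_right smult_add_left)

lemma code_dim_eq_dim: "code_dim C = poly3.dim C"
  unfolding code_dim_def ..

lemma smult_mult_monom: "smult (a::F3) (g * monom 1 i) = g * monom a i"
  by (metis mult.right_neutral mult_smult_right smult_monom)

lemma cyclic_code_subspace:
  assumes n: "0 < n" and g: "g dvd xn_minus_1 n"
  shows "poly3.subspace (cyclic_code n g)"
  unfolding poly3.subspace_def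
proof (intro conjI ballI allI)
  show "0 \<in> cyclic_code n g"
    using n by (simp add: cyclic_code_iff[OF n g])
  fix x y assume "x \<in> cyclic_code n g" "y \<in> cyclic_code n g"
  then show "x + y \<in> cyclic_code n g"
    using degree_add_le_max[of x y] by (auto simp: cyclic_code_iff[OF n g])
next
  fix a x assume "x \<in> cyclic_code n g"
  then show "smult a x \<in> cyclic_code n g"
    using degree_smult_le[of a x] by (auto simp: cyclic_code_iff[OF n g] intro: dvd_smult)
qed

lemma independent_mult_monom:
  assumes g: "g \<noteq> 0"
  shows "poly3.independent ((\<lambda>i. g * monom 1 i) ` {..<k})" (is "poly3.independent ?B")
proof -
  have inj: "inj_on (\<lambda>i. g * monom 1 i) {..<k}"
    using g by (intro inj_onI) (metis coeff_monom mult_cancel_left one_neq_zero)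
  show ?thesis
    unfolding poly3.dependent_finite[OF finite_imageI[OF finite_lessThan]]
  proof
    assume "\<exists>u. (\<exists>v\<in>?B. u v \<noteq> 0) \<and> (\<Sum>v\<in>?B. smult (u v) v) = 0"
    then obtain u v where v: "v \<in> ?B" "u v \<noteq> 0" and sum0: "(\<Sum>v\<in>?B. smult (u v) v) = 0"
      by blast
    define a where "a i = u (g * monom 1 i)" for i
    have "(\<Sum>v\<in>?B. smult (u v) v) = g * (\<Sum>i<k. monom (a i) i)"
      by (simp add: sum.reindex[OF inj] a_def smult_mult_monom sum_distrib_left)
    then have "(\<Sum>i<k. monom (a i) i) = 0"
      using sum0 g by simp
    then have "a i = 0" if "i < k" for i
    proof -
      have "coeff (\<Sum>i<k. monom (a i) i) i = 0"
        using \<open>(\<Sum>i<k. monom (a i) i) = 0\<close> by simp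
      then show ?thesis using that by (simp add: coeff_sum coeff_monom)
    qed
    then show False
      using v unfolding a_def by auto
  qed
qed

lemma cyclic_code_eq_span:
  assumes n: "0 < n" and g: "g dvd xn_minus_1 n"
  shows "cyclic_code n g = poly3.span ((\<lambda>i. g * monom 1 i) ` {..<n - degree g})"
    (is "_ = poly3.span ?B")
proof (intro equalityI subsetI)
  have g0: "g \<noteq> 0" using g xn_minus_1_nonzero[OF n] by auto
  fix c assume "c \<in> cyclic_code n g"
  then obtain a where c: "degree c < n" "c = g * a"
    using cyclic_code_iff[OF n g] by blast
  have "coeff a i = 0" if "n - degree g \<le> i" for i
    using c g0 that by (cases "a = 0") (auto simp: degree_mult_eq coeff_eq_0)
  then have "a = (\<Sum>i<n - degree g. monom (coeff a i) i)"
    by (intro poly_eqI) (auto simp: coeff_sum coeff_monom)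
  then have "c = g * (\<Sum>i<n - degree g. monom (coeff a i) i)"
    using c(2) by (metis arg_cong)
  also have "\<dots> = (\<Sum>i<n - degree g. smult (coeff a i) (g * monom 1 i))"
    by (simp add: sum_distrib_left smult_mult_monom)
  also have "\<dots> \<in> poly3.span ?B"
    by (intro poly3.span_sum poly3.span_scale poly3.span_base) auto
  finally show "c \<in> poly3.span ?B" .
next
  have g0: "g \<noteq> 0" using g xn_minus_1_nonzero[OF n] by auto
  have "degree g \<le> n"
    using g xn_minus_1_nonzero[OF n] degree_xn_minus_1[OF n] by (metis dvd_imp_degree_le)
  have "?B \<subseteq> cyclic_code n g"
    using g0 \<open>degree g \<le> n\<close>
    by (auto simp: cyclic_code_iff[OF n g] degree_mult_eq degree_monom_eq)
  then show "c \<in> cyclic_code n g" if "c \<in> poly3.span ?B" for c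
    using poly3.span_minimal[OF _ cyclic_code_subspace[OF n g]] that by blast
qed

lemma code_dim_cyclic_code:
  assumes n: "0 < n" and g: "g dvd xn_minus_1 n"
  shows "code_dim (cyclic_code n g) = n - degree g"
proof -
  have g0: "g \<noteq> 0" using g xn_minus_1_nonzero[OF n] by auto
  have "inj_on (\<lambda>i. g * monom 1 i) {..<n - degree g}"
    using g0 by (intro inj_onI) (metis coeff_monom mult_cancel_left one_neq_zero)
  then show ?thesis
    unfolding code_dim_eq_dim cyclic_code_eq_span[OF n g]
      poly3.dim_span_eq_card_independent[OF independent_mult_monom[OF g0]]
    by (simp add: card_image)
qed

lemma min_dist_ge_mono: "min_dist_ge C D \<Longrightarrow> D' \<le> D \<Longrightarrow> min_dist_ge C D'"
  unfolding min_dist_ge_def using order_trans by blast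

section \<open>BCH codes defined by a primitive root of unity\<close>

locale prim_root3 =
  fixes n :: nat and \<beta> :: "'k::{field,finite}"
  assumes char3: "CHAR('k) = 3" and n_pos: "0 < n" and coprime_n_3: "coprime n 3"
    and beta_pow_n: "\<beta> ^ n = 1"
    and beta_pow_inj: "\<And>i j. i < n \<Longrightarrow> j < n \<Longrightarrow> \<beta> ^ i = \<beta> ^ j \<Longrightarrow> i = j"
begin

sublocale emb3: field_hom "emb3 :: F3 \<Rightarrow> 'k"
  by (rule field_hom_emb3[OF char3])

sublocale emb3_poly: map_poly_inj_idom_divide_hom "emb3 :: F3 \<Rightarrow> 'k" ..

abbreviation lift :: "F3 poly \<Rightarrow> 'k poly" where
  "lift p \<equiv> map_poly emb3 p"

lemma poly_lift_cube: "poly (lift p) (x ^ 3) = poly (lift p) x ^ 3"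
proof (induction p)
  case (pCons a p)
  have "poly (lift (pCons a p)) (x ^ 3) = emb3 a ^ 3 + (x * poly (lift p) x) ^ 3"
    using pCons(2) emb3_cube[OF char3] by (simp add: emb3.map_poly_pCons_hom power_mult_distrib)
  also have "\<dots> = poly (lift (pCons a p)) x ^ 3"
    using add_cube_char3[OF char3] by (simp add: emb3.map_poly_pCons_hom)
  finally show ?case .
qed simp

lemma poly_lift_pow_three_pow: "poly (lift p) (x ^ 3 ^ k) = poly (lift p) x ^ 3 ^ k"
proof (induction k)
  case (Suc k)
  have "poly (lift p) (x ^ 3 ^ Suc k) = poly (lift p) ((x ^ 3 ^ k) ^ 3)"
    by (simp add: power_mult[symmetric] mult.commute)
  also have "\<dots> = poly (lift p) (x ^ 3 ^ k) ^ 3"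
    by (rule poly_lift_cube)
  also have "\<dots> = poly (lift p) x ^ 3 ^ Suc k"
    using Suc by (simp add: power_mult[symmetric] mult.commute)
  finally show ?case .
qed simp

lemma beta_nonzero: "\<beta> \<noteq> 0"
  using beta_pow_n n_pos by (cases n) auto

lemma beta_pow_mod: "\<beta> ^ j = \<beta> ^ (j mod n)"
proof -
  have "\<beta> ^ j = \<beta> ^ (n * (j div n) + j mod n)" by simp
  also have "\<dots> = \<beta> ^ (j mod n)" by (simp only: power_add power_mult beta_pow_n) simp
  finally show ?thesis .
qed

lemma beta_pow_pow_n: "(\<beta> ^ i) ^ n = 1"
proof -
  have "(\<beta> ^ i) ^ n = (\<beta> ^ n) ^ i" by (simp only: power_mult[symmetric] mult.commute)
  then show ?thesis using beta_pow_n by simp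
qed

lemma lift_xn_minus_1_eq: "lift (xn_minus_1 n) = [:-1:] + monom 1 n"
  by (simp add: xn_minus_1_def emb3_poly.hom_add emb3.hom_uminus)

lemma poly_lift_xn_minus_1: "poly (lift (xn_minus_1 n)) x = x ^ n - 1"
  by (simp add: lift_xn_minus_1_eq poly_monom)

lemma lift_xn_minus_1: "lift (xn_minus_1 n) = lin_prod ((\<lambda>i. \<beta> ^ i) ` {..<n})"
proof (rule eq_lin_prod_if_roots)
  have "inj_on (\<lambda>i. \<beta> ^ i) {..<n}" by (auto intro: inj_onI beta_pow_inj)
  then show "degree (lift (xn_minus_1 n)) = card ((\<lambda>i. \<beta> ^ i) ` {..<n})"
    using degree_xn_minus_1[OF n_pos] by (simp add: card_image)
  have "coeff [:-1::'k:] n = 0"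
    using n_pos by (cases n) auto
  then have "coeff (lift (xn_minus_1 n)) n = 1"
    by (simp add: lift_xn_minus_1_eq)
  then show "monic (lift (xn_minus_1 n))"
    using degree_xn_minus_1[OF n_pos] by simp
qed (auto simp: poly_lift_xn_minus_1 beta_pow_pow_n)

lemma root_xn_minus_1: "poly (lift (xn_minus_1 n)) x = 0 \<Longrightarrow> \<exists>j<n. x = \<beta> ^ j"
  using roots_lin_prod[of "(\<lambda>i. \<beta> ^ i) ` {..<n}"] lift_xn_minus_1 by auto

lemma poly_xn_minus_1_beta: "poly (lift (xn_minus_1 n)) (\<beta> ^ j) = 0"
  by (simp add: poly_lift_xn_minus_1 beta_pow_pow_n)

lemma poly_lift_mod:
  assumes "poly (lift q) x = 0"
  shows "poly (lift (p mod q)) x = poly (lift p) x"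
proof -
  have "lift p = lift q * lift (p div q) + lift (p mod q)"
    by (simp flip: emb3_poly.hom_mult emb3_poly.hom_add)
  then show ?thesis using assms by simp
qed

lemma minpoly3_spec:
  assumes "\<exists>r. r \<noteq> 0 \<and> poly (lift r) \<gamma> = 0"
  shows "monic (minpoly3 \<gamma>)" "poly (lift (minpoly3 \<gamma>)) \<gamma> = 0"
    "\<And>r. poly (lift r) \<gamma> = 0 \<Longrightarrow> minpoly3 \<gamma> dvd r"
proof -
  define P where "P = (\<lambda>d. \<exists>r. r \<noteq> 0 \<and> poly (lift r) \<gamma> = 0 \<and> degree r = d)"
  obtain r0 where r0: "r0 \<noteq> 0" "poly (lift r0) \<gamma> = 0" "degree r0 = (LEAST d. P d)"
    using LeastI_ex[of P] assms unfolding P_def by blast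
  define p where "p = smult (inverse (lead_coeff r0)) r0"
  have lc: "lead_coeff r0 \<noteq> 0"
    using r0(1) by simp
  have p: "monic p" "poly (lift p) \<gamma> = 0" "degree p = (LEAST d. P d)"
    unfolding p_def using lc r0(2,3) by (simp_all add: emb3.map_poly_hom_smult)
  have "p dvd r" if r: "poly (lift r) \<gamma> = 0" for r
  proof (rule ccontr)
    assume "\<not> p dvd r"
    then have nz: "r mod p \<noteq> 0" by (simp add: mod_eq_0_iff_dvd)
    have "poly (lift (r mod p)) \<gamma> = 0"
      using r poly_lift_mod[OF p(2)] by simp
    then have "P (degree (r mod p))"
      using nz unfolding P_def by blast
    then have "(LEAST d. P d) \<le> degree (r mod p)"
      by (rule Least_le)
    moreover have "p \<noteq> 0" using p(1) by auto
    then have "degree (r mod p) < degree p"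
      using degree_mod_less'[OF _ nz] by blast
    ultimately show False using p(3) by simp
  qed
  then have "\<exists>!p. monic p \<and> poly (lift p) \<gamma> = 0 \<and> (\<forall>r. poly (lift r) \<gamma> = 0 \<longrightarrow> p dvd r)"
    using p by (intro ex1I[of _ p]) (auto intro!: poly_dvd_antisym)
  from theI'[OF this, folded minpoly3_def]
  show "monic (minpoly3 \<gamma>)" "poly (lift (minpoly3 \<gamma>)) \<gamma> = 0"
    "\<And>r. poly (lift r) \<gamma> = 0 \<Longrightarrow> minpoly3 \<gamma> dvd r" by auto
qed

lemma annihilator_beta: "\<exists>r. r \<noteq> 0 \<and> poly (lift r) (\<beta> ^ j) = 0"
  using xn_minus_1_nonzero[OF n_pos] poly_xn_minus_1_beta by blast

lemmas minpoly3_beta = minpoly3_spec[OF annihilator_beta]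

lemma minpoly3_beta_dvd: "minpoly3 (\<beta> ^ j) dvd xn_minus_1 n"
  using minpoly3_beta(3) poly_xn_minus_1_beta by blast

lemma poly_minpoly3_beta_conj: "poly (lift (minpoly3 (\<beta> ^ s))) (\<beta> ^ (s * 3 ^ k mod n)) = 0"
proof -
  have "\<beta> ^ (s * 3 ^ k mod n) = (\<beta> ^ s) ^ 3 ^ k"
    using beta_pow_mod[of "s * 3 ^ k"] by (simp add: power_mult)
  then show ?thesis
    using poly_lift_pow_three_pow minpoly3_beta(2) by simp
qed

definition coset_poly :: "nat \<Rightarrow> 'k poly" where
  "coset_poly s = (\<Prod>l\<in>cyc_coset 3 n s. [:- (\<beta> ^ l), 1:])"

text \<open>The Frobenius map \<open>x \<mapsto> x^3\<close> permutes the roots of \<open>coset_poly s\<close>, so its coefficients lie in \<open>F\<^sub>3\<close>.\<close>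
lemma map_poly_cube_coset_poly: "map_poly (\<lambda>x. x ^ 3) (coset_poly s) = coset_poly s"
proof -
  interpret cube: comm_ring_hom "\<lambda>x::'k. x ^ 3"
    by unfold_locales (simp_all add: add_cube_char3[OF char3] power_mult_distrib)
  interpret cube_poly: map_poly_comm_ring_hom "\<lambda>x::'k. x ^ 3" ..
  have perm: "(\<lambda>l. l * 3 mod n) ` cyc_coset 3 n s = cyc_coset 3 n s"
    by (rule cyc_coset_times_image[OF coprime_n_3])
  have "map_poly (\<lambda>x. x ^ 3) (coset_poly s) = (\<Prod>l\<in>cyc_coset 3 n s. [:- (\<beta> ^ (l * 3 mod n)), 1:])"
    unfolding coset_poly_def cube_poly.hom_prod
    by (intro prod.cong refl) (simp add: cube.hom_uminus power_mult flip: beta_pow_mod)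
  also have "\<dots> = (\<Prod>l\<in>(\<lambda>l. l * 3 mod n) ` cyc_coset 3 n s. [:- (\<beta> ^ l), 1:])"
  proof -
    have "inj_on (\<lambda>l. l * 3 mod n) (cyc_coset 3 n s)"
      using perm by (metis cyc_coset_finite eq_card_imp_inj_on)
    then show ?thesis by (simp only: prod.reindex comp_def)
  qed
  finally show ?thesis
    unfolding perm coset_poly_def .
qed

definition coset_poly3 :: "nat \<Rightarrow> F3 poly" where
  "coset_poly3 s = map_poly (inv_into UNIV emb3) (coset_poly s)"

lemma lift_coset_poly3: "lift (coset_poly3 s) = coset_poly s"
proof (rule poly_eqI)
  fix i
  have "coeff (coset_poly s) i ^ 3 = coeff (coset_poly s) i"
    using arg_cong[OF map_poly_cube_coset_poly, of "\<lambda>p. coeff p i"] by (simp add: coeff_map_poly)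
  then have "coeff (coset_poly s) i \<in> range emb3"
    by (rule cube_eq_self_in_range_emb3[OF char3])
  moreover have "inv_into UNIV emb3 (0::'k) = 0"
    using emb3.inv_f_f[of 0] by simp
  ultimately show "coeff (lift (coset_poly3 s)) i = coeff (coset_poly s) i"
    by (auto simp: coset_poly3_def coeff_map_poly f_inv_into_f)
qed

lemma minpoly3_dvd_coset_poly3: "s < n \<Longrightarrow> minpoly3 (\<beta> ^ s) dvd coset_poly3 s"
  using cyc_coset_self[OF coprime_n_3]
  by (intro minpoly3_beta(3)) (auto simp: lift_coset_poly3 coset_poly_def poly_prod cyc_coset_finite)

lemma poly_lift_dvd_root: "p dvd q \<Longrightarrow> poly (lift p) x = 0 \<Longrightarrow> poly (lift q) x = 0"
  by (auto elim!: dvdE simp: emb3_poly.hom_mult)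

definition gen_poly :: "nat set \<Rightarrow> F3 poly" where
  "gen_poly S = Lcm ((\<lambda>i. minpoly3 (\<beta> ^ i)) ` S)"

definition def_set :: "nat set \<Rightarrow> nat set" where
  "def_set S = (\<Union>i\<in>S. cyc_coset 3 n i)"

lemma bch_gen_eq_gen_poly: "bch_gen \<beta> \<delta> b = gen_poly {b .. b + \<delta> - 2}"
  by (simp add: bch_gen_def gen_poly_def)

lemma def_set_less: "j \<in> def_set S \<Longrightarrow> j < n"
  unfolding def_set_def using cyc_coset_less[OF n_pos] by auto

lemma gen_poly_dvd: "gen_poly S dvd xn_minus_1 n"
  unfolding gen_poly_def by (rule Lcm_least) (auto intro: minpoly3_beta_dvd)

lemma poly_gen_poly_beta_iff:
  assumes S: "\<forall>i\<in>S. i < n" and j: "j < n"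
  shows "poly (lift (gen_poly S)) (\<beta> ^ j) = 0 \<longleftrightarrow> j \<in> def_set S"
proof
  assume "j \<in> def_set S"
  then obtain i k where i: "i \<in> S" "j = i * 3 ^ k mod n"
    unfolding def_set_def by (auto simp: cyc_coset_eq_range[OF coprime_n_3])
  have "minpoly3 (\<beta> ^ i) dvd gen_poly S"
    unfolding gen_poly_def using i(1) by (intro dvd_Lcm) auto
  then show "poly (lift (gen_poly S)) (\<beta> ^ j) = 0"
    using poly_minpoly3_beta_conj[of i k] i(2) by (simp add: poly_lift_dvd_root)
next
  assume root: "poly (lift (gen_poly S)) (\<beta> ^ j) = 0"
  have fin: "finite S" using S by (metis finite_lessThan finite_subset lessThan_iff subsetI)
  have "gen_poly S dvd (\<Prod>i\<in>S. coset_poly3 i)"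
    unfolding gen_poly_def
  proof (rule Lcm_least, clarsimp)
    fix i assume "i \<in> S"
    then have "coset_poly3 i dvd (\<Prod>i\<in>S. coset_poly3 i)"
      using fin by (rule dvd_prodI[rotated])
    then show "minpoly3 (\<beta> ^ i) dvd (\<Prod>i\<in>S. coset_poly3 i)"
      using S \<open>i \<in> S\<close> minpoly3_dvd_coset_poly3 dvd_trans by blast
  qed
  then have "poly (lift (\<Prod>i\<in>S. coset_poly3 i)) (\<beta> ^ j) = 0"
    using root by (rule poly_lift_dvd_root)
  then have "poly (\<Prod>i\<in>S. coset_poly i) (\<beta> ^ j) = 0"
    by (simp add: emb3_poly.hom_prod lift_coset_poly3)
  then obtain i l where "i \<in> S" "l \<in> cyc_coset 3 n i" "\<beta> ^ j = \<beta> ^ l"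
    using fin by (auto simp: poly_prod coset_poly_def cyc_coset_finite)
  then show "j \<in> def_set S"
    unfolding def_set_def using beta_pow_inj[OF j cyc_coset_less[OF n_pos]] by auto
qed

lemma degree_gen_poly:
  assumes S: "\<forall>i\<in>S. i < n"
  shows "degree (gen_poly S) = card (def_set S)"
proof -
  have "lift (gen_poly S) dvd lin_prod ((\<lambda>i. \<beta> ^ i) ` {..<n})"
    using gen_poly_dvd by (simp flip: lift_xn_minus_1)
  from degree_eq_card_roots_if_dvd_lin_prod[OF _ this]
  have "degree (gen_poly S) = card {x. poly (lift (gen_poly S)) x = 0}"
    by simp
  also have "{x. poly (lift (gen_poly S)) x = 0} = (\<lambda>j. \<beta> ^ j) ` def_set S"
  proof (intro equalityI subsetI)
    fix x assume x: "x \<in> {x. poly (lift (gen_poly S)) x = 0}"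
    have "poly (lift (xn_minus_1 n)) x = 0"
      using poly_lift_dvd_root[OF gen_poly_dvd] x by simp
    then obtain j where "j < n" "x = \<beta> ^ j"
      using root_xn_minus_1 by blast
    then show "x \<in> (\<lambda>j. \<beta> ^ j) ` def_set S"
      using poly_gen_poly_beta_iff[OF S] x by auto
  next
    fix x assume "x \<in> (\<lambda>j. \<beta> ^ j) ` def_set S"
    then obtain j where "j \<in> def_set S" "x = \<beta> ^ j" by blast
    then show "x \<in> {x. poly (lift (gen_poly S)) x = 0}"
      using poly_gen_poly_beta_iff[OF S def_set_less] by blast
  qed
  also have "card ((\<lambda>j. \<beta> ^ j) ` def_set S) = card (def_set S)"
    by (rule card_image) (auto intro!: inj_onI beta_pow_inj dest: def_set_less)
  finally show ?thesis .
qed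

lemma poly_codeword_beta:
  assumes S: "\<forall>i\<in>S. i < n" and c: "c \<in> cyclic_code n (gen_poly S)" and j: "j \<in> def_set S"
  shows "poly (lift c) (\<beta> ^ j) = 0"
proof -
  have "gen_poly S dvd c"
    using c cyclic_code_iff[OF n_pos gen_poly_dvd] by blast
  then show ?thesis
    using poly_gen_poly_beta_iff[OF S def_set_less[OF j]] j poly_lift_dvd_root by blast
qed

lemma bch_bound:
  assumes c: "c \<noteq> 0" "degree c < n"
    and zeros: "\<And>k. k < D - 1 \<Longrightarrow> poly (lift c) (\<beta> ^ (b + k)) = 0"
  shows "D \<le> hweight c"
proof (rule ccontr)
  define S where "S = {i. coeff c i \<noteq> 0}"
  assume "\<not> D \<le> hweight c"
  then have card_S: "card S < D" unfolding hweight_def S_def by simp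
  have fin: "finite S"
    unfolding S_def by (rule finite_subset[of _ "{..degree c}"]) (auto simp: le_degree)
  have S_less: "i < n" if "i \<in> S" for i
    using that c(2) le_degree unfolding S_def by fastforce
  have poly_eq: "poly (lift c) y = (\<Sum>i\<in>S. emb3 (coeff c i) * y ^ i)" for y
  proof -
    have "poly (lift c) y = (\<Sum>i\<le>degree c. emb3 (coeff c i) * y ^ i)"
      by (simp add: poly_altdef)
    also have "\<dots> = (\<Sum>i\<in>S. emb3 (coeff c i) * y ^ i)"
      unfolding S_def by (rule sum.mono_neutral_right) (auto simp: le_degree)
    finally show ?thesis .
  qed
  have swap: "(\<beta> ^ j) ^ (b + k) = (\<beta> ^ (b + k)) ^ j" for j k
    by (simp only: power_mult[symmetric] mult.commute)
  have sums: "(\<Sum>j\<in>S. emb3 (coeff c j) * (\<beta> ^ j) ^ (b + k)) = 0" if "k < card S" for k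
  proof -
    have "poly (lift c) (\<beta> ^ (b + k)) = 0"
      using zeros that card_S by simp
    then show ?thesis
      unfolding swap poly_eq .
  qed
  have "emb3 (coeff c j) = (0::'k)" if "j \<in> S" for j
  proof (rule vandermonde_kernel[OF fin _ _ sums that])
    show "inj_on (\<lambda>i. \<beta> ^ i) S"
      using S_less by (auto intro!: inj_onI beta_pow_inj)
  qed (simp add: beta_nonzero)
  then have "S = {}" unfolding S_def by auto
  then show False using c(1) unfolding S_def by (auto intro: poly_eqI)
qed

lemma poly_lift_eq_sum: "degree c < n \<Longrightarrow> poly (lift c) y = (\<Sum>i<n. emb3 (coeff c i) * y ^ i)"
  by (simp add: poly_altdef) (intro sum.mono_neutral_left; auto simp: coeff_eq_0)

lemma inverse_beta_pow_mult: "inverse \<beta> ^ i * \<beta> ^ i = 1"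
  using beta_nonzero by (simp flip: power_mult_distrib)

lemma sum_roots_of_unity:
  assumes "i < n" "l < n"
  shows "(\<Sum>j<n. (inverse \<beta> ^ i * \<beta> ^ l) ^ j) = (if i = l then of_nat n else 0)"
proof (cases "i = l")
  case True
  then show ?thesis using inverse_beta_pow_mult by simp
next
  case False
  define z where "z = inverse \<beta> ^ i * \<beta> ^ l"
  have "\<beta> ^ i * z = \<beta> ^ l"
    unfolding z_def using inverse_beta_pow_mult[of i] by (metis mult.assoc mult.commute mult_1_right)
  then have "z \<noteq> 1"
    using beta_pow_inj assms False by force
  moreover have "z ^ n = 1"
  proof -
    have "(inverse \<beta> ^ i) ^ n = inverse ((\<beta> ^ n) ^ i)"
      by (simp only: power_inverse power_mult[symmetric] mult.commute)
    moreover have "(\<beta> ^ l) ^ n = (\<beta> ^ n) ^ l"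
      by (simp only: power_mult[symmetric] mult.commute)
    ultimately show ?thesis
      unfolding z_def power_mult_distrib by (simp add: beta_pow_n)
  qed
  ultimately have "(\<Sum>j<n. z ^ j) = 0"
    by (simp add: geometric_sum)
  then show ?thesis using False unfolding z_def by simp
qed

lemma dft_term_eq:
  "(x::'k) * (inverse \<beta> ^ j) ^ i * (y * (\<beta> ^ j) ^ l) = x * y * (inverse \<beta> ^ i * \<beta> ^ l) ^ j"
proof -
  have "(inverse \<beta> ^ j) ^ i = (inverse \<beta> ^ i) ^ j" "(\<beta> ^ j) ^ l = (\<beta> ^ l) ^ j"
    by (simp_all only: power_mult[symmetric] mult.commute)
  then show ?thesis by (simp only: power_mult_distrib mult_ac)
qed

lemma parseval:
  assumes c: "degree c < n" and w: "degree w < n"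
  shows "of_nat n * emb3 (\<Sum>i<n. coeff c i * coeff w i) =
    (\<Sum>j<n. poly (lift c) (inverse \<beta> ^ j) * poly (lift w) (\<beta> ^ j))"
proof -
  define a where "a i = (emb3 (coeff c i) :: 'k)" for i
  define b where "b i = (emb3 (coeff w i) :: 'k)" for i
  have "(\<Sum>j<n. poly (lift c) (inverse \<beta> ^ j) * poly (lift w) (\<beta> ^ j))
      = (\<Sum>j<n. \<Sum>i<n. \<Sum>l<n. a i * b l * (inverse \<beta> ^ i * \<beta> ^ l) ^ j)"
    unfolding poly_lift_eq_sum[OF c] poly_lift_eq_sum[OF w] a_def[symmetric] b_def[symmetric]
      sum_product by (simp only: dft_term_eq)
  also have "\<dots> = (\<Sum>i<n. \<Sum>l<n. \<Sum>j<n. a i * b l * (inverse \<beta> ^ i * \<beta> ^ l) ^ j)"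
    by (subst sum.swap) (rule sum.cong[OF refl], rule sum.swap)
  also have "\<dots> = (\<Sum>i<n. \<Sum>l<n. if l = i then a i * b l * of_nat n else 0)"
    by (intro sum.cong refl) (auto simp: sum_roots_of_unity simp flip: sum_distrib_left)
  also have "\<dots> = of_nat n * (\<Sum>i<n. a i * b i)"
    by (simp add: sum_distrib_left mult.commute)
  also have "(\<Sum>i<n. a i * b i) = emb3 (\<Sum>i<n. coeff c i * coeff w i)"
    unfolding a_def b_def by (simp add: emb3.hom_sum emb3.hom_mult)
  finally show ?thesis by simp
qed

lemma dual_codeword_transform:
  assumes g: "g dvd xn_minus_1 n" and c: "c \<in> dual_code n (cyclic_code n g)" and j: "j < n"
  shows "poly (lift c) (inverse \<beta> ^ j) * poly (lift g) (\<beta> ^ j) = 0"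
proof -
  have dc: "degree c < n" using c unfolding dual_code_def by blast
  define w where "w k = (monom 1 k * g) mod xn_minus_1 n" for k
  have w: "w k \<in> cyclic_code n g" for k
  proof -
    have "degree (w k) < n"
      using degree_mod_less'[OF xn_minus_1_nonzero[OF n_pos]] degree_xn_minus_1[OF n_pos] n_pos
      unfolding w_def by (cases "w k = 0") (auto simp: w_def)
    moreover have "g dvd w k"
      unfolding w_def using g by (intro dvd_mod) auto
    ultimately show ?thesis
      using cyclic_code_iff[OF n_pos g] by blast
  qed
  have poly_w: "poly (lift (w k)) (\<beta> ^ j) = poly (lift g) (\<beta> ^ j) * (\<beta> ^ j) ^ k" for j k
    unfolding w_def poly_lift_mod[OF poly_xn_minus_1_beta]
    by (simp add: emb3_poly.hom_mult poly_monom mult.commute)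
  have sums: "(\<Sum>j\<in>{..<n}. poly (lift c) (inverse \<beta> ^ j) * poly (lift g) (\<beta> ^ j) * (\<beta> ^ j) ^ (0 + k)) = 0"
    if "k < card {..<n}" for k
  proof -
    have "degree (w k) < n"
      using w[of k] cyclic_code_iff[OF n_pos g] by blast
    from parseval[OF dc this]
    have "(\<Sum>j<n. poly (lift c) (inverse \<beta> ^ j) * poly (lift (w k)) (\<beta> ^ j))
        = of_nat n * emb3 (\<Sum>i<n. coeff c i * coeff (w k) i)" ..
    also have "(\<Sum>i<n. coeff c i * coeff (w k) i) = 0"
      using c w[of k] unfolding dual_code_def by blast
    finally show ?thesis
      by (simp add: poly_w mult.assoc)
  qed
  show ?thesis
  proof (rule vandermonde_kernel[OF _ _ _ sums])
    show "inj_on (\<lambda>j. \<beta> ^ j) {..<n}"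
      by (auto intro!: inj_onI beta_pow_inj)
  qed (use j beta_nonzero in auto)
qed

lemma zero_if_beta_pow_roots:
  assumes c: "degree c < n" and roots: "\<And>j. j < n \<Longrightarrow> poly (lift c) (\<beta> ^ j) = 0"
  shows "c = 0"
proof (rule ccontr)
  assume "c \<noteq> 0"
  then have c0: "lift c \<noteq> 0" by simp
  have "inj_on (\<lambda>i. \<beta> ^ i) {..<n}"
    by (auto intro!: inj_onI beta_pow_inj)
  then have "n = card ((\<lambda>i. \<beta> ^ i) ` {..<n})"
    by (simp add: card_image)
  also have "\<dots> \<le> card {x. poly (lift c) x = 0}"
    using roots by (intro card_mono poly_roots_finite[OF c0]) auto
  also have "\<dots> \<le> degree (lift c)"
    by (rule poly_roots_degree[OF c0])
  finally show False using c by simp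
qed

text \<open>A common word of the code and its dual has a transform vanishing on the defining set and,
  by Parseval, on its negative.\<close>
lemma code_inter_dual_roots:
  assumes S: "\<forall>i\<in>S. i < n" and neg: "\<And>j. j \<in> def_set S \<Longrightarrow> (n - j) mod n \<in> def_set S"
    and c: "c \<in> cyclic_code n (gen_poly S)" "c \<in> dual_code n (cyclic_code n (gen_poly S))"
    and j': "j' < n"
  shows "poly (lift c) (\<beta> ^ j') = 0"
proof (cases "j' \<in> def_set S")
  case True
  then show ?thesis using poly_codeword_beta[OF S c(1)] by blast
next
  case False
  define j where "j = (n - j') mod n"
  have j: "j < n" "(n - j) mod n = j'"
    using j' n_pos unfolding j_def by (auto simp: mod_if)
  have "j \<notin> def_set S"
  proof
    assume "j \<in> def_set S"
    then have "(n - j) mod n \<in> def_set S" by (rule neg)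
    then show False using j(2) False by simp
  qed
  then have "poly (lift (gen_poly S)) (\<beta> ^ j) \<noteq> 0"
    using poly_gen_poly_beta_iff[OF S j(1)] by simp
  then have "poly (lift c) (inverse \<beta> ^ j) = 0"
    using dual_codeword_transform[OF gen_poly_dvd c(2) j(1)] by simp
  moreover have "inverse \<beta> ^ j = \<beta> ^ j'"
  proof -
    have "\<beta> ^ j * \<beta> ^ j' = \<beta> ^ ((j + j') mod n)"
      by (simp only: beta_pow_mod[of "j + j'", symmetric] power_add)
    also have "(j + j') mod n = 0"
      using j' unfolding j_def by (cases "j' = 0") (simp_all add: mod_add_left_eq[symmetric])
    finally have "\<beta> ^ j * \<beta> ^ j' = 1" by simp
    then have "inverse \<beta> ^ j = inverse \<beta> ^ j * \<beta> ^ j * \<beta> ^ j'"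
      by (simp add: mult.assoc)
    then show ?thesis
      using inverse_beta_pow_mult[of j] by simp
  qed
  ultimately show ?thesis by simp
qed

lemma is_LCD_cyclic_code:
  assumes S: "\<forall>i\<in>S. i < n" and neg: "\<And>j. j \<in> def_set S \<Longrightarrow> (n - j) mod n \<in> def_set S"
  shows "is_LCD n (cyclic_code n (gen_poly S))"
proof -
  let ?C = "cyclic_code n (gen_poly S)"
  have "c = 0" if c: "c \<in> ?C" "c \<in> dual_code n ?C" for c
  proof (rule zero_if_beta_pow_roots)
    show "degree c < n"
      using c(1) cyclic_code_iff[OF n_pos gen_poly_dvd] by blast
  qed (rule code_inter_dual_roots[OF S neg c])
  moreover have "0 \<in> ?C" "0 \<in> dual_code n ?C"
    using n_pos by (auto simp: cyclic_code_iff[OF n_pos gen_poly_dvd] dual_code_def)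
  ultimately show ?thesis
    unfolding is_LCD_def by blast
qed

end

lemma field_pow_card_minus_1:
  fixes \<alpha> :: "'k::{field,finite}"
  assumes "\<alpha> \<noteq> 0"
  shows "\<alpha> ^ (CARD('k) - 1) = 1"
proof -
  define U where "U = (UNIV :: 'k set) - {0}"
  have "(\<lambda>x. \<alpha> * x) ` U = U"
  proof (rule endo_inj_surj)
    show "(\<lambda>x. \<alpha> * x) ` U \<subseteq> U" "inj_on (\<lambda>x. \<alpha> * x) U"
      using assms by (auto simp: U_def inj_on_def)
  qed (simp add: U_def)
  moreover have "inj_on (\<lambda>x. \<alpha> * x) U"
    using assms by (auto simp: inj_on_def)
  ultimately have "(\<Prod>x\<in>U. \<alpha> * x) = (\<Prod>x\<in>U. x)"
    using prod.reindex[of "\<lambda>x. \<alpha> * x" U id] by simp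
  then have "\<alpha> ^ card U * (\<Prod>x\<in>U. x) = 1 * (\<Prod>x\<in>U. x)"
    by (simp add: prod.distrib)
  moreover have "(\<Prod>x\<in>U. x) \<noteq> 0"
    by (simp add: U_def)
  moreover have "card U = CARD('k) - 1"
    by (simp add: U_def card_Diff_subset)
  ultimately show ?thesis
    by (metis mult_right_cancel)
qed

lemma generator_pow_inj:
  fixes \<alpha> :: "'k::{field,finite}"
  assumes "\<alpha> \<noteq> 0" and gen: "\<forall>x::'k. x \<noteq> 0 \<longrightarrow> (\<exists>i::nat. x = \<alpha> ^ i)"
    and ij: "i < j" "j < CARD('k) - 1"
  shows "\<alpha> ^ i \<noteq> \<alpha> ^ j"
proof
  assume eq: "\<alpha> ^ i = \<alpha> ^ j"
  define d where "d = j - i"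
  have d: "\<alpha> ^ d = 1"
    using eq ij(1) assms(1) unfolding d_def by (simp add: power_diff)
  have "{x::'k. x \<noteq> 0} \<subseteq> (\<lambda>i. \<alpha> ^ i) ` {..<d}"
  proof
    fix x :: 'k assume "x \<in> {x. x \<noteq> 0}"
    then obtain k where "x = \<alpha> ^ k" using gen by auto
    also have "\<dots> = \<alpha> ^ (d * (k div d) + k mod d)" by simp
    also have "\<dots> = \<alpha> ^ (k mod d)" by (simp only: power_add power_mult d) simp
    finally show "x \<in> (\<lambda>i. \<alpha> ^ i) ` {..<d}"
      using ij(1) unfolding d_def by auto
  qed
  then have "card {x::'k. x \<noteq> 0} \<le> card ((\<lambda>i. \<alpha> ^ i) ` {..<d})"
    by (intro card_mono) simp_all
  also have "\<dots> \<le> d"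
    using card_image_le[of "{..<d}" "\<lambda>i. \<alpha> ^ i"] by simp
  finally have "card {x::'k. x \<noteq> 0} \<le> d" .
  moreover have "{x::'k. x \<noteq> 0} = UNIV - {0}" by auto
  then have "card {x::'k. x \<noteq> 0} = CARD('k) - 1"
    by (simp add: card_Diff_subset)
  ultimately show False
    using ij unfolding d_def by simp
qed

lemma CHAR_eq_3: "CARD('k::{field,finite}) = 3 ^ k \<Longrightarrow> CHAR('k) = 3"
proof -
  assume card: "CARD('k) = 3 ^ k"
  have pr: "prime CHAR('k)"
    by (rule prime_CHAR_semidom) (simp add: finite_imp_CHAR_pos)
  have "CHAR('k) dvd 3 ^ k"
    using CHAR_dvd_CARD[where 'a = 'k] card by simp
  then have "CHAR('k) dvd 3"
    using pr prime_dvd_power by blast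
  moreover have "prime (3::nat)" by simp
  ultimately show ?thesis
    using pr by (blast intro: primes_dvd_imp_eq)
qed

lemma prim_root3_of_generator:
  fixes \<alpha> :: "'k::{field,finite}"
  assumes coprime: "coprime n 3" and card: "CARD('k) = 3 ^ ord n 3" and "\<alpha> \<noteq> 0"
    and gen: "\<forall>x::'k. x \<noteq> 0 \<longrightarrow> (\<exists>i::nat. x = \<alpha> ^ i)"
  shows "prim_root3 n (\<alpha> ^ ((3 ^ ord n 3 - 1) div n))"
proof (unfold_locales)
  define N where "N = 3 ^ ord n 3 - (1::nat)"
  have N: "N = CARD('k) - 1" unfolding N_def card ..
  have "n dvd N"
    using ord[of 3 n] unfolding N_def by (simp add: cong_altdef_nat)
  then obtain q where q: "N = n * q" by blast
  show n: "0 < n" using coprime by (cases n) auto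
  then have Nq: "N div n = q" using q by simp
  have "0 < ord n 3"
    using coprime_ord[OF coprime] by blast
  then have "3 ^ 1 \<le> (3::nat) ^ ord n 3"
    by (intro power_increasing) (simp_all add: Suc_le_eq)
  then have "0 < q" using q unfolding N_def by (cases q) auto
  have "(\<alpha> ^ (N div n)) ^ n = \<alpha> ^ N"
    unfolding Nq q by (simp add: power_mult[symmetric] mult.commute)
  also have "\<dots> = 1"
    unfolding N by (rule field_pow_card_minus_1[OF \<open>\<alpha> \<noteq> 0\<close>])
  finally show "(\<alpha> ^ ((3 ^ ord n 3 - 1) div n)) ^ n = 1"
    unfolding N_def .
  fix i j
  assume ij: "i < n" "j < n" "(\<alpha> ^ ((3 ^ ord n 3 - 1) div n)) ^ i = (\<alpha> ^ ((3 ^ ord n 3 - 1) div n)) ^ j"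
  have "q * i < CARD('k) - 1" "q * j < CARD('k) - 1"
    using ij(1,2) \<open>0 < q\<close> q unfolding N[symmetric] by (simp_all add: mult.commute)
  moreover have "\<alpha> ^ (q * i) = \<alpha> ^ (q * j)"
    using ij(3) unfolding N_def[symmetric] Nq by (simp add: power_mult)
  ultimately have "q * i = q * j"
    using generator_pow_inj[OF \<open>\<alpha> \<noteq> 0\<close> gen] by (metis linorder_neqE_nat)
  then show "i = j" using \<open>0 < q\<close> by simp
qed (use CHAR_eq_3[OF card] coprime in auto)

section \<open>The LCD BCH codes of length \<open>(3^m + 1)/4\<close>\<close>

locale lcd_bch = ternary_length m n + prim_root3 n \<beta>
  for m n :: nat and \<beta> :: "'k::{field,finite}"
begin

lemma def_set_eq:
  assumes "d1 - 1 \<le> \<delta>" "\<delta> \<le> d1"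
  shows "def_set {1..\<delta> - 1} = {1..<n} - C d1"
    and "def_set {0..\<delta> - 1} = insert 0 ({1..<n} - C d1)"
proof -
  show *: "def_set {1..\<delta> - 1} = {1..<n} - C d1"
    unfolding def_set_def using union_cosets_eq[of "\<delta> - 1"] assms d1_ge by simp
  have "C 0 = {0}"
    by (simp add: coset_eq_range)
  moreover have "{0..\<delta> - 1} = insert 0 {1..\<delta> - 1}" by auto
  ultimately show "def_set {0..\<delta> - 1} = insert 0 ({1..<n} - C d1)"
    using * unfolding def_set_def by simp
qed

lemma def_set_minus:
  assumes \<delta>: "d1 - 1 \<le> \<delta>" "\<delta> \<le> d1" and b: "b = 0 \<or> b = 1" and j: "j \<in> def_set {b..\<delta> - 1}"
  shows "(n - j) mod n \<in> def_set {b..\<delta> - 1}"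
proof (cases "j = 0")
  case True
  then show ?thesis using j by simp
next
  case False
  then have "j \<in> {1..<n} - C d1"
    using j b def_set_eq[OF \<delta>] by auto
  then have "(n - j) mod n \<in> {1..<n} - C d1"
    using minus_notin_coset_d1 by simp
  then show ?thesis
    using b def_set_eq[OF \<delta>] by auto
qed

lemma bch_code_1_params:
  assumes \<delta>: "d1 - 1 \<le> \<delta>" "\<delta> \<le> d1"
  shows "is_LCD n (bch_code \<beta> n \<delta> 1)" "code_dim (bch_code \<beta> n \<delta> 1) = 2 * m + 1"
    "min_dist_ge (bch_code \<beta> n \<delta> 1) \<delta>"
proof -
  have code: "bch_code \<beta> n \<delta> 1 = cyclic_code n (gen_poly {1..\<delta> - 1})"
    using \<delta> d1_ge by (simp add: bch_code_def bch_gen_eq_gen_poly)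
  have S: "\<forall>i\<in>{1..\<delta> - 1}. i < n" using \<delta> d1_less by auto
  show "is_LCD n (bch_code \<beta> n \<delta> 1)"
    unfolding code using def_set_minus[OF \<delta>, of 1] by (intro is_LCD_cyclic_code[OF S]) auto
  show "code_dim (bch_code \<beta> n \<delta> 1) = 2 * m + 1"
    unfolding code code_dim_cyclic_code[OF n_pos gen_poly_dvd] degree_gen_poly[OF S]
      def_set_eq(1)[OF \<delta>] card_complement_coset_d1
    using two_m_less by simp
  show "min_dist_ge (bch_code \<beta> n \<delta> 1) \<delta>"
    unfolding min_dist_ge_def
  proof (intro ballI impI)
    fix c assume c: "c \<in> bch_code \<beta> n \<delta> 1" "c \<noteq> 0"
    have "degree c < n"
      using c(1) cyclic_code_iff[OF n_pos gen_poly_dvd] unfolding code by blast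
    then show "\<delta> \<le> hweight c"
    proof (rule bch_bound[OF c(2), where b = 1])
      fix k assume "k < \<delta> - 1"
      then have "1 + k \<in> def_set {1..\<delta> - 1}"
        unfolding def_set_def using S coset_self[of "1 + k"] by auto
      then show "poly (lift c) (\<beta> ^ (1 + k)) = 0"
        using poly_codeword_beta[OF S] c(1) unfolding code by blast
    qed
  qed
qed

text \<open>The defining set of the second code contains the \<open>2\<delta> - 1\<close> consecutive exponents
  \<open>-(\<delta> - 1), \<dots>, \<delta> - 1\<close>, since each coset is closed under negation.\<close>
lemma consecutive_in_def_set:
  assumes \<delta>: "\<delta> \<le> d1" and k: "k < 2 * \<delta> - 1"
  shows "(n - (\<delta> - 1) + k) mod n \<in> def_set {0..\<delta> - 1}"
proof (cases "k < \<delta> - 1")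
  case True
  define i where "i = \<delta> - 1 - k"
  have i: "0 < i" "i < n" "i \<le> \<delta> - 1" "(n - (\<delta> - 1) + k) mod n = n - i"
    using True \<delta> d1_less unfolding i_def by auto
  then have "n - i \<in> C i"
    using coset_minus[OF i(1,2) coset_self[OF i(2)]] by simp
  then show ?thesis
    unfolding def_set_def using i by auto
next
  case False
  define i where "i = k - (\<delta> - 1)"
  have i: "i < n" "i \<le> \<delta> - 1" "n - (\<delta> - 1) + k = i + n"
    using False k \<delta> d1_less unfolding i_def by auto
  then have "(n - (\<delta> - 1) + k) mod n = i" by simp
  then show ?thesis
    unfolding def_set_def using i coset_self[OF i(1)] by auto
qed

lemma bch_code_0_params:
  assumes \<delta>: "d1 - 1 \<le> \<delta>" "\<delta> \<le> d1"
  shows "is_LCD n (bch_code \<beta> n (\<delta> + 1) 0)" "code_dim (bch_code \<beta> n (\<delta> + 1) 0) = 2 * m"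
    "min_dist_ge (bch_code \<beta> n (\<delta> + 1) 0) (2 * \<delta>)"
proof -
  have code: "bch_code \<beta> n (\<delta> + 1) 0 = cyclic_code n (gen_poly {0..\<delta> - 1})"
    using \<delta> d1_ge by (simp add: bch_code_def bch_gen_eq_gen_poly)
  have S: "\<forall>i\<in>{0..\<delta> - 1}. i < n" using \<delta> d1_less by auto
  show "is_LCD n (bch_code \<beta> n (\<delta> + 1) 0)"
    unfolding code using def_set_minus[OF \<delta>, of 0] by (intro is_LCD_cyclic_code[OF S]) auto
  have "0 \<notin> {1..<n} - C d1" by simp
  then have "card (def_set {0..\<delta> - 1}) = n - 2 * m"
    using card_complement_coset_d1 two_m_less unfolding def_set_eq(2)[OF \<delta>] by simp
  then show "code_dim (bch_code \<beta> n (\<delta> + 1) 0) = 2 * m"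
    unfolding code code_dim_cyclic_code[OF n_pos gen_poly_dvd] degree_gen_poly[OF S]
    using two_m_less by simp
  show "min_dist_ge (bch_code \<beta> n (\<delta> + 1) 0) (2 * \<delta>)"
    unfolding min_dist_ge_def
  proof (intro ballI impI)
    fix c assume c: "c \<in> bch_code \<beta> n (\<delta> + 1) 0" "c \<noteq> 0"
    have "degree c < n"
      using c(1) cyclic_code_iff[OF n_pos gen_poly_dvd] unfolding code by blast
    then show "2 * \<delta> \<le> hweight c"
    proof (rule bch_bound[OF c(2), where b = "n - (\<delta> - 1)"])
      fix k assume "k < 2 * \<delta> - 1"
      then have "poly (lift c) (\<beta> ^ ((n - (\<delta> - 1) + k) mod n)) = 0"
        using poly_codeword_beta[OF S] c(1) consecutive_in_def_set[OF \<delta>(2)] unfolding code by blast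
      then show "poly (lift c) (\<beta> ^ (n - (\<delta> - 1) + k)) = 0"
        by (simp flip: beta_pow_mod)
    qed
  qed
qed

end

theorem theorem8:
  fixes \<alpha> :: "'k::{field,finite}" and m t n \<delta> :: nat
  assumes "m = 2 * t + 1" and "m \<ge> 5"
    and "n = (3 ^ m + 1) div 4"
    and "CARD('k) = 3 ^ ord n 3"
    and "\<alpha> \<noteq> 0" and "\<forall>x::'k. x \<noteq> 0 \<longrightarrow> (\<exists>i::nat. x = \<alpha> ^ i)"
    and "delta_idx 3 2 n + 1 \<le> \<delta>" and "\<delta> \<le> delta_idx 3 1 n"
  shows "let \<beta> = \<alpha> ^ ((3 ^ ord n 3 - 1) div n) in
     is_LCD n (bch_code \<beta> n \<delta> 1) \<and> code_dim (bch_code \<beta> n \<delta> 1) = 2 * m + 1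
       \<and> min_dist_ge (bch_code \<beta> n \<delta> 1) (delta_idx 3 2 n)
   \<and> is_LCD n (bch_code \<beta> n (\<delta> + 1) 0) \<and> code_dim (bch_code \<beta> n (\<delta> + 1) 0) = 2 * m
       \<and> min_dist_ge (bch_code \<beta> n (\<delta> + 1) 0) (2 * delta_idx 3 2 n)"
proof -
  interpret ternary_length m n
    using assms(1-3) by unfold_locales simp_all
  define \<beta> where "\<beta> = \<alpha> ^ ((3 ^ ord n 3 - 1) div n)"
  interpret lcd_bch m n \<beta>
    unfolding \<beta>_def
    by (intro lcd_bch.intro ternary_length_axioms prim_root3_of_generator n_coprime_3 assms(4-6))
  have \<delta>: "d1 - 1 \<le> \<delta>" "\<delta> \<le> d1"
    using assms(7,8) delta_idx_1 delta_idx_2 d1_ge by auto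
  show ?thesis
    unfolding Let_def \<beta>_def[symmetric] delta_idx_2
    using bch_code_1_params[OF \<delta>] bch_code_0_params[OF \<delta>] \<delta>
    by (auto elim: min_dist_ge_mono)
qed

end
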